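(* Let $m>0$ and $C>\frac{2}{(4\pi)^2}$. There is a constant $D^a_C$ independent of $\varepsilon\in(0,1]$ such that for all $\varepsilon\in(0,1]$ and $(x,z)\in\mathbb{R}^2\times\mathbb{R}^2$, $$|\overline{\mathcal{G}}_\varepsilon(x,z)|\le C\log_+\Big(\frac1{\sqrt{|x|^2+|z|^2}\vee\varepsilon}\Big)+D^a_C,$$ where $\log_+(t)=\max(\log t,0)$ and $a\vee b=\max(a,b)$.
   Context: For $\varepsilon\in(0,1]$ and $(x,z)\in\mathbb{R}^2\times\mathbb{R}^2$, with $k=(k_1,k_2)$, $$\overline{\mathcal{G}}_\varepsilon(x,z)=\frac1{(2\pi)^4}\int_{\mathbb{R}^4}\frac{\sin^2(\varepsilon k_1/2)\sin^2(\varepsilon k_2/2)}{\varepsilon^4k_1^2k_2^2}\cdot\frac{e^{-i(x\cdot y+k\cdot z)}}{\big(|y|^2+4\varepsilon^{-2}\sin^2(\varepsilon k_1/2)+4\varepsilon^{-2}\sin^2(\varepsilon k_2/2)+m^2\big)^2}\,\mathrm{d}y\,\mathrm{d}k.$$ *)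

theory Defs
  imports "HOL-Analysis.Analysis"
begin

definition log_plus :: "real \<Rightarrow> real" where
  "log_plus t = max (ln t) 0"

definition Gbar_integrand ::
  "real \<Rightarrow> real \<Rightarrow> real \<times> real \<Rightarrow> real \<times> real \<Rightarrow> (real \<times> real) \<times> (real \<times> real) \<Rightarrow> complex" where
  "Gbar_integrand m \<epsilon> x z yk =
     (case yk of (y, k) \<Rightarrow>
       complex_of_real
         ((sin (\<epsilon> * fst k / 2))\<^sup>2 * (sin (\<epsilon> * snd k / 2))\<^sup>2
           / (\<epsilon> ^ 4 * (fst k)\<^sup>2 * (snd k)\<^sup>2))
       * cis (- (x \<bullet> y + k \<bullet> z))
       / complex_of_real
         (((norm y)\<^sup>2 + 4 / \<epsilon>\<^sup>2 * (sin (\<epsilon> * fst k / 2))\<^sup>2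
            + 4 / \<epsilon>\<^sup>2 * (sin (\<epsilon> * snd k / 2))\<^sup>2 + m\<^sup>2)\<^sup>2))"

definition Gbar :: "real \<Rightarrow> real \<Rightarrow> real \<times> real \<Rightarrow> real \<times> real \<Rightarrow> complex" where
  "Gbar m \<epsilon> x z =
     complex_of_real (1 / (2 * pi) ^ 4) * integral\<^sup>L lborel (Gbar_integrand m \<epsilon> x z)"

end

theory Submission
  imports Defs "HOL-Probability.Distributions" "HOL-Real_Asymp.Real_Asymp"
begin

text \<open>Schwinger's formula \<open>1 / A\<^sup>2 = \<integral>\<^sub>0\<^sup>\<infinity> t e\<^sup>-\<^sup>t\<^sup>A dt\<close> and Fubini write the integral as a time
  integral of \<open>t e\<^sup>-\<^sup>t\<^sup>m\<^sup>2\<close> times a product of four one-dimensional Fourier transforms: of the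
  Gaussian \<open>e\<^sup>-\<^sup>t\<^sup>y\<^sup>2\<close> in the two continuum directions and of the lattice heat factor
  \<open>sin\<^sup>2 (\<epsilon>k/2) / (\<epsilon>k)\<^sup>2 \<cdot> exp (- t 4 \<epsilon>\<^sup>-\<^sup>2 sin\<^sup>2 (\<epsilon>k/2))\<close> in the two lattice directions.
  Each factor is bounded by its \<open>L\<^sup>1\<close> norm, of order \<open>t\<^sup>-\<^sup>1\<^sup>/\<^sup>2\<close> (and at most \<open>2/\<epsilon>\<close> in the lattice
  directions), and decays like \<open>1/|\<xi>|\<close>: shifting \<open>h\<close> by half a period \<open>\<pi>/|\<xi>|\<close> flips the sign of
  its transform, and \<open>h - h(\<cdot> + \<pi>/|\<xi>|)\<close> has \<open>L\<^sup>1\<close> norm at most \<open>\<pi>/|\<xi>|\<close> times the total variation.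
  With \<open>r = |(x, z)|\<close>, for \<open>t \<le> r\<^sup>2\<close> the largest coordinate gives the factor \<open>1/r\<close> and the
  integrand is \<open>O(1/(r \<surd>t))\<close>; for \<open>r\<^sup>2 \<le> t \<le> \<epsilon>\<^sup>2\<close> it is \<open>O(\<epsilon>\<^sup>-\<^sup>2)\<close>; for \<open>t \<ge> max(r, \<epsilon>)\<^sup>2\<close> it is at most
  \<open>\<pi>/t\<close>, which integrated up to \<open>t = 1\<close> gives \<open>2\<pi> log\<^sub>+ (1 / max(r, \<epsilon>))\<close>, while beyond
  \<open>t = 1\<close> the mass makes it integrable. After the prefactor \<open>(2\<pi>)\<^sup>-\<^sup>4\<close> the coefficient of the
  logarithm is \<open>1/(8\<pi>\<^sup>3) \<le> 2/(4\<pi>)\<^sup>2\<close>.\<close>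

lemma mult_exp_neg_le_1:
  fixes s :: real assumes "0 \<le> s" shows "s * exp (- s) \<le> 1"
proof -
  have "1 + s \<le> exp s" by (rule exp_ge_add_one_self)
  then have "s \<le> exp s" by linarith
  then show ?thesis by (simp add: exp_minus field_simps)
qed

lemma mult_exp_neg_square_le_1:
  fixes s :: real assumes "0 \<le> s" shows "s * exp (- s\<^sup>2) \<le> 1"
proof -
  have "0 \<le> (s - 1)\<^sup>2" by simp
  then have "s \<le> 1 + s\<^sup>2" using assms by (simp add: power2_eq_square algebra_simps)
  also have "\<dots> \<le> exp (s\<^sup>2)" by (rule exp_ge_add_one_self)
  finally show ?thesis by (simp add: exp_minus field_simps)
qed

lemma cube_mult_exp_neg_square_le_1:
  fixes s :: real assumes "0 \<le> s" shows "s ^ 3 * exp (- s\<^sup>2) \<le> 1"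
proof -
  have "0 \<le> s\<^sup>2 * (1 - s / 2)\<^sup>2" by simp
  then have "s ^ 3 \<le> (1 + s\<^sup>2 / 2)\<^sup>2"
    by (simp add: power2_eq_square power3_eq_cube algebra_simps)
  also have "\<dots> \<le> (exp (s\<^sup>2 / 2))\<^sup>2"
    by (intro power_mono exp_ge_add_one_self) (auto intro: add_nonneg_nonneg)
  also have "\<dots> = exp (s\<^sup>2)" by (simp flip: exp_double)
  finally show ?thesis by (simp add: exp_minus field_simps)
qed

lemma abs_sin_minus_cubic_le:
  fixes w :: real shows "\<bar>sin w - (w - w ^ 3 / 6)\<bar> \<le> w ^ 4 / 24"
proof -
  have sum: "(\<Sum>m<4. sin_coeff m * w ^ m) = w - w ^ 3 / 6"
    by (simp add: numeral_eq_Suc sin_coeff_Suc cos_coeff_Suc field_simps power3_eq_cube)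
  have "\<bar>sin w - (w - w ^ 3 / 6)\<bar> \<le> inverse (fact 4) * \<bar>w\<bar> ^ 4"
    using Maclaurin_sin_bound[of w 4] unfolding sum .
  also have "inverse (fact 4) * \<bar>w\<bar> ^ 4 = w ^ 4 / 24" by (simp add: fact_numeral)
  finally show ?thesis .
qed

lemma abs_cos_minus_quadratic_le:
  fixes w :: real shows "\<bar>cos w - (1 - w\<^sup>2 / 2)\<bar> \<le> w ^ 4 / 24"
proof -
  obtain t where "cos w = (\<Sum>m<4. cos_coeff m * w ^ m) + cos (t + 1 / 2 * real 4 * pi) / fact 4 * w ^ 4"
    using Maclaurin_cos_expansion by blast
  moreover have "(\<Sum>m<4. cos_coeff m * w ^ m) = 1 - w\<^sup>2 / 2"
    by (simp add: numeral_eq_Suc sin_coeff_Suc cos_coeff_Suc field_simps power2_eq_square)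
  ultimately have "\<bar>cos w - (1 - w\<^sup>2 / 2)\<bar> = \<bar>cos (t + 1 / 2 * real 4 * pi)\<bar> / 24 * w ^ 4"
    by (simp add: fact_numeral abs_mult)
  also have "\<dots> \<le> 1 / 24 * w ^ 4" by (intro mult_right_mono divide_right_mono) auto
  finally show ?thesis by simp
qed

lemma abs_mult_cos_minus_sin_le:
  fixes w :: real assumes "\<bar>w\<bar> \<le> 1" shows "\<bar>w * cos w - sin w\<bar> \<le> 5 / 12 * \<bar>w\<bar> ^ 3"
proof -
  have w4: "w ^ 4 \<le> \<bar>w\<bar> ^ 3" "\<bar>w\<bar> * w ^ 4 \<le> \<bar>w\<bar> ^ 3"
  proof -
    have "w ^ 4 = \<bar>w\<bar> ^ 3 * \<bar>w\<bar>"
      by (simp add: power_abs[symmetric] abs_mult[symmetric] power4_eq_xxxx power3_eq_cube)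
    also have "\<dots> \<le> \<bar>w\<bar> ^ 3" using assms by (intro mult_left_le) auto
    finally show "w ^ 4 \<le> \<bar>w\<bar> ^ 3" .
    moreover have "\<bar>w\<bar> * w ^ 4 \<le> w ^ 4" using assms by (intro mult_left_le_one_le) auto
    ultimately show "\<bar>w\<bar> * w ^ 4 \<le> \<bar>w\<bar> ^ 3" by linarith
  qed
  define a where "a = w * (cos w - (1 - w\<^sup>2 / 2))"
  define b where "b = sin w - (w - w ^ 3 / 6)"
  have "w * cos w - sin w = a - b - w ^ 3 / 3"
    by (simp add: a_def b_def algebra_simps power2_eq_square power3_eq_cube)
  moreover have "\<bar>w ^ 3 / 3\<bar> = \<bar>w\<bar> ^ 3 / 3" by (simp add: power_abs)
  ultimately have "\<bar>w * cos w - sin w\<bar> \<le> \<bar>a\<bar> + \<bar>b\<bar> + \<bar>w\<bar> ^ 3 / 3"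
    using abs_triangle_ineq4[of a b] abs_triangle_ineq4[of "a - b" "w ^ 3 / 3"] by linarith
  also have "\<dots> = \<bar>w\<bar> * \<bar>cos w - (1 - w\<^sup>2 / 2)\<bar> + \<bar>sin w - (w - w ^ 3 / 6)\<bar> + \<bar>w\<bar> ^ 3 / 3"
    by (simp add: a_def b_def abs_mult)
  also have "\<dots> \<le> \<bar>w\<bar> * (w ^ 4 / 24) + w ^ 4 / 24 + \<bar>w\<bar> ^ 3 / 3"
    by (intro add_mono mult_left_mono abs_sin_minus_cubic_le abs_cos_minus_quadratic_le) auto
  also have "\<dots> \<le> 5 / 12 * \<bar>w\<bar> ^ 3" using w4 by simp
  finally show ?thesis .
qed

lemma half_square_le_sin_square:
  fixes w :: real assumes "\<bar>w\<bar> \<le> 1" shows "w\<^sup>2 / 2 \<le> (sin w)\<^sup>2"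
proof -
  have "\<bar>w\<bar> ^ 3 = \<bar>w\<bar> * \<bar>w\<bar>\<^sup>2" by (simp add: power3_eq_cube power2_eq_square)
  also have "\<dots> \<le> \<bar>w\<bar>" using assms by (intro mult_left_le) (auto simp: abs_square_le_1)
  finally have "\<bar>w ^ 3 / 6\<bar> \<le> \<bar>w\<bar> / 6" by (simp add: power_abs)
  moreover have "w ^ 4 / 24 \<le> \<bar>w\<bar> / 24"
  proof -
    have "w ^ 4 = \<bar>w\<bar> ^ 3 * \<bar>w\<bar>"
      by (simp add: power_abs[symmetric] abs_mult[symmetric] power4_eq_xxxx power3_eq_cube)
    also have "\<dots> \<le> 1 * \<bar>w\<bar>" using assms by (intro mult_right_mono) (auto simp: power_le_one)
    finally show ?thesis by simp
  qed
  ultimately have "19 / 24 * \<bar>w\<bar> \<le> \<bar>sin w\<bar>" using abs_sin_minus_cubic_le[of w] by linarith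
  then have "(19 / 24 * \<bar>w\<bar>)\<^sup>2 \<le> \<bar>sin w\<bar>\<^sup>2" by (intro power_mono) auto
  moreover have "(19 / 24 * \<bar>w\<bar>)\<^sup>2 = 361 / 576 * w\<^sup>2"
    unfolding power_mult_distrib power2_abs by (simp add: power_divide)
  ultimately show ?thesis using zero_le_power2[of w] by (simp only: power2_abs)
qed

text \<open>The quotient below is a quarter of the derivative of \<open>(sin w / w)\<^sup>2\<close>.\<close>

lemma abs_sinc_square_deriv_le:
  fixes w :: real assumes "w \<noteq> 0"
  shows "\<bar>sin w * (w * cos w - sin w) / (2 * w ^ 3)\<bar> \<le> min 1 (1 / w\<^sup>2)"
proof -
  have quotient: "\<bar>sin w * (w * cos w - sin w) / (2 * w ^ 3)\<bar>
      = \<bar>sin w\<bar> * \<bar>w * cos w - sin w\<bar> / (2 * \<bar>w\<bar> ^ 3)"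
    by (simp add: abs_mult power_abs)
  show ?thesis
  proof (cases "\<bar>w\<bar> \<le> 1")
    case True
    have "\<bar>sin w\<bar> * \<bar>w * cos w - sin w\<bar> \<le> \<bar>w\<bar> * (5 / 12 * \<bar>w\<bar> ^ 3)"
      by (intro mult_mono abs_mult_cos_minus_sin_le True) (auto simp: abs_sin_x_le_abs_x)
    then have "\<bar>sin w * (w * cos w - sin w) / (2 * w ^ 3)\<bar> \<le> \<bar>w\<bar> * (5 / 12 * \<bar>w\<bar> ^ 3) / (2 * \<bar>w\<bar> ^ 3)"
      unfolding quotient by (intro divide_right_mono) auto
    also have "\<dots> = 5 / 24 * \<bar>w\<bar>" using assms by (simp add: field_simps)
    also have "\<dots> \<le> min 1 (1 / w\<^sup>2)"
      using True assms abs_square_le_1[of w] by (simp add: field_simps)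
    finally show ?thesis .
  next
    case False
    have "\<bar>w * cos w\<bar> \<le> \<bar>w\<bar>"
      using mult_left_le[OF abs_cos_le_one[of w], of "\<bar>w\<bar>"] by (simp add: abs_mult)
    then have "\<bar>w * cos w - sin w\<bar> \<le> \<bar>w\<bar> + 1"
      using abs_triangle_ineq4[of "w * cos w" "sin w"] abs_sin_le_one[of w] by linarith
    then have "\<bar>sin w\<bar> * \<bar>w * cos w - sin w\<bar> \<le> 1 * (2 * \<bar>w\<bar>)"
      using False by (intro mult_mono) auto
    then have "\<bar>sin w * (w * cos w - sin w) / (2 * w ^ 3)\<bar> \<le> 2 * \<bar>w\<bar> / (2 * \<bar>w\<bar> ^ 3)"
      unfolding quotient by (intro divide_right_mono) auto
    also have "\<dots> = 1 / w\<^sup>2" using assms by (simp add: field_simps power2_eq_square power3_eq_cube)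
    also have "\<dots> \<le> min 1 (1 / w\<^sup>2)" using False power_mono[of 1 "\<bar>w\<bar>" 2] by (simp add: field_simps)
    finally show ?thesis .
  qed
qed

lemma min_divide_square_antimono:
  fixes a b s s' :: real assumes "0 \<le> b" "0 < s" "s \<le> s'"
  shows "min a (b / s'\<^sup>2) \<le> min a (b / s\<^sup>2)"
proof -
  have "s\<^sup>2 \<le> s'\<^sup>2" using assms by (intro power_mono) auto
  then have "b / s'\<^sup>2 \<le> b / s\<^sup>2" using assms by (intro divide_left_mono) auto
  then show ?thesis by simp
qed

lemma mult4_mono:
  fixes p1 p2 p3 p4 q1 q2 q3 q4 :: real
  assumes "0 \<le> p1" "0 \<le> p2" "0 \<le> p3" "0 \<le> p4" "p1 \<le> q1" "p2 \<le> q2" "p3 \<le> q3" "p4 \<le> q4"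
  shows "p1 * p2 * (p3 * p4) \<le> q1 * q2 * (q3 * q4)"
proof -
  have "p1 * p2 \<le> q1 * q2" using assms by (intro mult_mono) auto
  moreover have "p3 * p4 \<le> q3 * q4" using assms by (intro mult_mono) auto
  ultimately show ?thesis using assms by (intro mult_mono) auto
qed

lemma mult4_le_cube_mult:
  fixes p1 p2 p3 p4 B b :: real
  assumes p: "0 \<le> p1" "0 \<le> p2" "0 \<le> p3" "0 \<le> p4" and B: "p1 \<le> B" "p2 \<le> B" "p3 \<le> B" "p4 \<le> B"
    and b: "p1 \<le> b \<or> p2 \<le> b \<or> p3 \<le> b \<or> p4 \<le> b"
  shows "p1 * p2 * (p3 * p4) \<le> B ^ 3 * b"
proof -
  consider "p1 \<le> b" | "p2 \<le> b" | "p3 \<le> b" | "p4 \<le> b" using b by blast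
  then show ?thesis
  proof cases
    case 1
    show ?thesis using mult4_mono[OF p 1 B(2-4)] by (simp add: power3_eq_cube mult_ac)
  next
    case 2
    show ?thesis using mult4_mono[OF p B(1) 2 B(3-4)] by (simp add: power3_eq_cube mult_ac)
  next
    case 3
    show ?thesis using mult4_mono[OF p B(1-2) 3 B(4)] by (simp add: power3_eq_cube mult_ac)
  next
    case 4
    show ?thesis using mult4_mono[OF p B(1-3) 4] by (simp add: power3_eq_cube mult_ac)
  qed
qed

lemma exists_coordinate_ge_half_norm:
  fixes x z :: "real \<times> real"
  defines "r \<equiv> sqrt ((norm x)\<^sup>2 + (norm z)\<^sup>2)"
  shows "r / 2 \<le> \<bar>fst x\<bar> \<or> r / 2 \<le> \<bar>snd x\<bar> \<or> r / 2 \<le> \<bar>fst z\<bar> \<or> r / 2 \<le> \<bar>snd z\<bar>"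
proof (rule ccontr)
  assume all_small: "\<not> ?thesis"
  have small: "c\<^sup>2 < (r / 2)\<^sup>2" if "\<bar>c\<bar> < r / 2" for c :: real
  proof -
    have "\<bar>c\<bar>\<^sup>2 < (r / 2)\<^sup>2" using that by (intro power_strict_mono) auto
    then show ?thesis by simp
  qed
  have "r\<^sup>2 = (fst x)\<^sup>2 + (snd x)\<^sup>2 + (fst z)\<^sup>2 + (snd z)\<^sup>2"
    by (simp add: r_def norm_prod_def)
  also have "\<dots> < 4 * (r / 2)\<^sup>2"
    using all_small small[of "fst x"] small[of "snd x"] small[of "fst z"] small[of "snd z"] by linarith
  also have "\<dots> = r\<^sup>2" by (simp add: power2_eq_square)
  finally show False by simp
qed

definition gaussian :: "real \<Rightarrow> real \<Rightarrow> real" where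
  "gaussian t y = exp (- t * y\<^sup>2)"

lemma gaussian_measurable[measurable]: "gaussian t \<in> borel_measurable borel"
  unfolding gaussian_def by measurable

lemma gaussian_pos: "0 < gaussian t y"
  by (simp add: gaussian_def)

lemma gaussian_eq_normal_density:
  assumes "0 < t" shows "gaussian t = (\<lambda>y. sqrt (pi / t) * normal_density 0 (1 / sqrt (2 * t)) y)"
proof
  fix y
  have "sqrt (pi / t) * (1 / sqrt (2 * pi * (1 / sqrt (2 * t))\<^sup>2)) = 1"
    using assms by (simp add: power_divide real_sqrt_divide real_sqrt_mult field_simps)
  moreover have "- (y - 0)\<^sup>2 / (2 * (1 / sqrt (2 * t))\<^sup>2) = - t * y\<^sup>2"
    using assms by (simp add: power_divide)
  ultimately show "gaussian t y = sqrt (pi / t) * normal_density 0 (1 / sqrt (2 * t)) y"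
    unfolding normal_density_def gaussian_def by (metis mult.assoc mult_1)
qed

lemma integrable_gaussian: "0 < t \<Longrightarrow> integrable lborel (gaussian t)"
  by (simp add: gaussian_eq_normal_density)

lemma integral_gaussian: "0 < t \<Longrightarrow> (\<integral>y. gaussian t y \<partial>lborel) = sqrt (pi / t)"
  by (simp add: gaussian_eq_normal_density)

lemma nn_integral_gaussian:
  "0 < t \<Longrightarrow> (\<integral>\<^sup>+y. ennreal (gaussian t y) \<partial>lborel) = ennreal (sqrt (pi / t))"
  by (subst nn_integral_eq_integral) (auto simp: integrable_gaussian integral_gaussian gaussian_pos less_imp_le)

lemma nn_integral_ennreal_cmult:
  fixes f :: "real \<Rightarrow> real"
  assumes "0 \<le> c" "f \<in> borel_measurable borel"
  shows "(\<integral>\<^sup>+t. ennreal (c * f t) \<partial>lborel) = ennreal c * (\<integral>\<^sup>+t. ennreal (f t) \<partial>lborel)"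
  using assms by (simp add: ennreal_mult' nn_integral_cmult)

lemma nn_integral_abs_eq_twice_pos:
  fixes F :: "real \<Rightarrow> ennreal" assumes [measurable]: "F \<in> borel_measurable borel"
  shows "(\<integral>\<^sup>+k. F \<bar>k\<bar> \<partial>lborel) = 2 * (\<integral>\<^sup>+s. F s * indicator {0<..} s \<partial>lborel)"
proof -
  have "(\<integral>\<^sup>+k. F \<bar>k\<bar> \<partial>lborel)
      = (\<integral>\<^sup>+k. F k * indicator {0<..} k + F (0 + (-1) * k) * indicator {0<..} (0 + (-1) * k) \<partial>lborel)"
  proof (intro nn_integral_cong_AE)
    show "AE k in lborel. F \<bar>k\<bar> = F k * indicator {0<..} k + F (0 + (-1) * k) * indicator {0<..} (0 + (-1) * k)"
      using AE_lborel_singleton[of 0] by eventually_elim (auto simp: indicator_def)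
  qed
  also have "\<dots> = (\<integral>\<^sup>+k. F k * indicator {0<..} k \<partial>lborel)
      + (\<integral>\<^sup>+k. F (0 + (-1) * k) * indicator {0<..} (0 + (-1) * k) \<partial>lborel)"
    by (rule nn_integral_add) auto
  also have "(\<integral>\<^sup>+k. F (0 + (-1) * k) * indicator {0<..} (0 + (-1) * k) \<partial>lborel)
      = (\<integral>\<^sup>+k. F k * indicator {0<..} k \<partial>lborel)"
    using nn_integral_real_affine[of "\<lambda>k. F k * indicator {0<..} k" "-1" 0] by simp
  finally show ?thesis by (simp add: mult_2)
qed

lemma nn_integral_powr_minus_half:
  fixes b :: real assumes "0 \<le> b"
  shows "(\<integral>\<^sup>+t. ennreal (indicator {0..b} t * t powr (- (1 / 2))) \<partial>lborel) = ennreal (2 * sqrt b)"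
proof -
  have "((\<lambda>t. t powr (- (1 / 2))) has_integral (b powr (- (1 / 2) + 1) / (- (1 / 2) + 1))) {0..b}"
    using assms by (intro has_integral_powr_from_0) auto
  then have "(\<integral>\<^sup>+t. ennreal (indicator {0..b} t * t powr (- (1 / 2))) \<partial>lborel)
      = ennreal (b powr (- (1 / 2) + 1) / (- (1 / 2) + 1))"
    by (intro nn_integral_has_integral_lebesgue) auto
  also have "b powr (- (1 / 2) + 1) / (- (1 / 2) + 1) = 2 * sqrt b"
    using assms by (simp add: powr_half_sqrt)
  finally show ?thesis .
qed

lemma nn_integral_inverse:
  fixes a b :: real assumes "0 < a" "a \<le> b"
  shows "(\<integral>\<^sup>+t. ennreal (indicator {a..b} t / t) \<partial>lborel) = ennreal (ln b - ln a)"
proof -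
  have "((\<lambda>t. 1 / t) has_integral (ln b - ln a)) {a..b}"
  proof (rule fundamental_theorem_of_calculus)
    show "(ln has_vector_derivative 1 / t) (at t within {a..b})" if "t \<in> {a..b}" for t
      using that assms
      by (auto intro!: derivative_eq_intros simp: has_real_derivative_iff_has_vector_derivative[symmetric])
  qed (rule assms)
  then have "(\<integral>\<^sup>+t. ennreal (indicator {a..b} t * (1 / t)) \<partial>lborel) = ennreal (ln b - ln a)"
    using assms by (intro nn_integral_has_integral_lebesgue) auto
  then show ?thesis by simp
qed

lemma nn_integral_powr_minus_2_atLeast:
  fixes s0 :: real assumes "0 < s0"
  shows "(\<integral>\<^sup>+s. ennreal (indicator {s0..} s * s powr (-2)) \<partial>lborel) = ennreal (1 / s0)"
proof -
  have "(\<integral>\<^sup>+s. ennreal (indicator {s0..} s * s powr (-2)) \<partial>lborel) = ennreal (- (s0 powr (-2 + 1)) / (-2 + 1))"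
    by (rule nn_integral_has_integral_lebesgue) (use assms has_integral_powr_to_inf[of "-2" s0] in auto)
  also have "- (s0 powr (-2 + 1)) / (-2 + 1) = 1 / s0" using assms by (simp add: powr_minus_divide)
  finally show ?thesis .
qed

lemma nn_integral_abs_powr_minus_2_atLeast:
  fixes s0 :: real assumes "0 < s0"
  shows "(\<integral>\<^sup>+k. ennreal (indicator {s0..} \<bar>k\<bar> * \<bar>k\<bar> powr (-2)) \<partial>lborel) = ennreal (2 / s0)"
proof -
  have "(\<integral>\<^sup>+k. ennreal (indicator {s0..} \<bar>k\<bar> * \<bar>k\<bar> powr (-2)) \<partial>lborel)
     = 2 * (\<integral>\<^sup>+s. ennreal (indicator {s0..} s * s powr (-2)) * indicator {0<..} s \<partial>lborel)"
    by (rule nn_integral_abs_eq_twice_pos[where F="\<lambda>s. ennreal (indicator {s0..} s * s powr (-2))"]) measurable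
  also have "(\<integral>\<^sup>+s. ennreal (indicator {s0..} s * s powr (-2)) * indicator {0<..} s \<partial>lborel)
     = (\<integral>\<^sup>+s. ennreal (indicator {s0..} s * s powr (-2)) \<partial>lborel)"
    using assms by (intro nn_integral_cong) (auto simp: indicator_def)
  also have "\<dots> = ennreal (1 / s0)" by (rule nn_integral_powr_minus_2_atLeast[OF assms])
  also have "2 * ennreal (1 / s0) = ennreal (2 / s0)"
    by (metis ennreal_mult' ennreal_numeral times_divide_eq_right mult_1_right zero_le_numeral)
  finally show ?thesis .
qed

lemma nn_integral_min_inverse_square_le:
  fixes a b s0 :: real assumes "0 \<le> a" "0 \<le> b" "0 < s0"
  shows "(\<integral>\<^sup>+s. ennreal (min a (b / s\<^sup>2)) * indicator {0<..} s \<partial>lborel) \<le> ennreal (a * s0 + b / s0)"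
proof -
  have "(\<integral>\<^sup>+s. ennreal (min a (b / s\<^sup>2)) * indicator {0<..} s \<partial>lborel)
     \<le> (\<integral>\<^sup>+s. ennreal a * indicator {0<..s0} s + ennreal b * ennreal (indicator {s0..} s * s powr (-2)) \<partial>lborel)"
  proof (intro nn_integral_mono)
    fix s :: real
    consider "s \<le> 0" | "0 < s" "s \<le> s0" | "s0 < s" by linarith
    then show "ennreal (min a (b / s\<^sup>2)) * indicator {0<..} s
        \<le> ennreal a * indicator {0<..s0} s + ennreal b * ennreal (indicator {s0..} s * s powr (-2))"
    proof cases
      case 1 then show ?thesis by (simp add: indicator_def)
    next
      case 2
      have "ennreal (min a (b / s\<^sup>2)) \<le> ennreal a" by (intro ennreal_leI) simp
      then show ?thesis using 2 by (simp add: indicator_def add_increasing2)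
    next
      case 3
      then have "0 < s" using assms by simp
      then have "ennreal (min a (b / s\<^sup>2)) \<le> ennreal b * ennreal (s powr (-2))"
        using assms by (simp add: ennreal_mult[symmetric] powr_minus powr_numeral divide_inverse)
      then show ?thesis using 3 \<open>0 < s\<close> assms by (simp add: indicator_def)
    qed
  qed
  also have "\<dots> = ennreal a * emeasure lborel {0<..s0}
      + ennreal b * (\<integral>\<^sup>+s. ennreal (indicator {s0..} s * s powr (-2)) \<partial>lborel)"
    by (simp add: nn_integral_add nn_integral_cmult)
  also have "\<dots> = ennreal (a * s0 + b / s0)"
    using assms by (simp add: nn_integral_powr_minus_2_atLeast ennreal_mult[symmetric]
        ennreal_plus[symmetric] del: ennreal_plus)
  finally show ?thesis .
qed

lemma nn_integral_exp_neg:
  fixes c :: real assumes "0 < c"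
  shows "(\<integral>\<^sup>+t. ennreal (indicator {0<..} t * exp (- t * c)) \<partial>lborel) = ennreal (1 / c)"
proof -
  have "(\<integral>\<^sup>+t. ennreal (exp (- t * c)) * indicator {0..} t \<partial>lborel) = 0 - (- exp (- 0 * c) / c)"
  proof (rule nn_integral_FTC_atLeast[where F = "\<lambda>t. - exp (- t * c) / c"])
    show "((\<lambda>t. - exp (- t * c) / c) has_real_derivative exp (- t * c)) (at t)" for t
      using assms by (auto intro!: derivative_eq_intros simp: field_simps)
    show "((\<lambda>t. - exp (- t * c) / c) \<longlongrightarrow> 0) at_top" using assms by real_asymp
  qed auto
  also have "(\<integral>\<^sup>+t. ennreal (exp (- t * c)) * indicator {0..} t \<partial>lborel)
      = (\<integral>\<^sup>+t. ennreal (indicator {0<..} t * exp (- t * c)) \<partial>lborel)"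
    using AE_lborel_singleton[of 0] by (intro nn_integral_cong_AE) (auto simp: indicator_def)
  finally show ?thesis by simp
qed

lemma has_bochner_integral_schwinger:
  fixes A :: real assumes "0 < A"
  shows "has_bochner_integral lborel (\<lambda>t. indicator {0<..} t * (t * exp (- t * A))) (1 / A\<^sup>2)"
proof -
  have "(\<integral>\<^sup>+t. ennreal (t * exp (- t * A)) * indicator {0..} t \<partial>lborel)
      = 0 - (- (0 / A + 1 / A\<^sup>2) * exp (- 0 * A))"
  proof (rule nn_integral_FTC_atLeast[where F = "\<lambda>t. - (t / A + 1 / A\<^sup>2) * exp (- t * A)"])
    show "((\<lambda>t. - (t / A + 1 / A\<^sup>2) * exp (- t * A)) has_real_derivative t * exp (- t * A)) (at t)" for t
      using assms by (auto intro!: derivative_eq_intros simp: field_simps power2_eq_square)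
    show "((\<lambda>t. - (t / A + 1 / A\<^sup>2) * exp (- t * A)) \<longlongrightarrow> 0) at_top"
      using assms by real_asymp
  qed auto
  then have "(\<integral>\<^sup>+t. ennreal (indicator {0<..} t * (t * exp (- t * A))) \<partial>lborel) = ennreal (1 / A\<^sup>2)"
    by (subst nn_integral_cong[where v = "\<lambda>t. ennreal (t * exp (- t * A)) * indicator {0..} t"])
      (auto simp: indicator_def)
  then show ?thesis
    by (intro has_bochner_integral_nn_integral) (auto simp: indicator_def intro!: AE_I2)
qed

lemma nn_integral_lborel_prod_mult:
  fixes u :: "'a::euclidean_space \<Rightarrow> ennreal" and v :: "'b::euclidean_space \<Rightarrow> ennreal"
  assumes [measurable]: "u \<in> borel_measurable borel" "v \<in> borel_measurable borel"
  shows "(\<integral>\<^sup>+pq. u (fst pq) * v (snd pq) \<partial>lborel) = (\<integral>\<^sup>+p. u p \<partial>lborel) * (\<integral>\<^sup>+q. v q \<partial>lborel)"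
proof -
  have "(\<integral>\<^sup>+pq. u (fst pq) * v (snd pq) \<partial>lborel) = (\<integral>\<^sup>+pq. u (fst pq) * v (snd pq) \<partial>(lborel \<Otimes>\<^sub>M lborel))"
    by (simp only: lborel_prod)
  also have "\<dots> = (\<integral>\<^sup>+p. \<integral>\<^sup>+q. u p * v q \<partial>lborel \<partial>lborel)"
    by (subst lborel.nn_integral_fst[symmetric]) auto
  also have "\<dots> = (\<integral>\<^sup>+p. u p \<partial>lborel) * (\<integral>\<^sup>+q. v q \<partial>lborel)"
    by (simp add: nn_integral_cmult nn_integral_multc)
  finally show ?thesis .
qed

lemma lborel_integral_prod_mult:
  fixes u :: "'a::euclidean_space \<Rightarrow> 'c::{real_normed_field, banach, second_countable_topology}"
    and v :: "'b::euclidean_space \<Rightarrow> 'c"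
  assumes u: "integrable lborel u" and v: "integrable lborel v"
  shows "integrable lborel (\<lambda>pq. u (fst pq) * v (snd pq))"
    and "(\<integral>pq. u (fst pq) * v (snd pq) \<partial>lborel) = (\<integral>p. u p \<partial>lborel) * (\<integral>q. v q \<partial>lborel)"
proof -
  have [measurable]: "u \<in> borel_measurable borel" "v \<in> borel_measurable borel"
    using u v by (auto dest: borel_measurable_integrable)
  have "(\<lambda>pq. u (fst pq) * v (snd pq)) \<in> borel_measurable (borel \<Otimes>\<^sub>M borel)" by measurable
  then have uv_measurable: "(\<lambda>pq. u (fst pq) * v (snd pq)) \<in> borel_measurable borel"
    by (simp only: borel_prod)
  have "(\<integral>\<^sup>+pq. ennreal (norm (u (fst pq) * v (snd pq))) \<partial>lborel)
      = (\<integral>\<^sup>+pq. ennreal (norm (u (fst pq))) * ennreal (norm (v (snd pq))) \<partial>lborel)"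
    by (simp add: norm_mult ennreal_mult)
  also have "\<dots> = (\<integral>\<^sup>+p. ennreal (norm (u p)) \<partial>lborel) * (\<integral>\<^sup>+q. ennreal (norm (v q)) \<partial>lborel)"
    by (rule nn_integral_lborel_prod_mult) auto
  also have "\<dots> < \<infinity>" using u v by (simp add: integrable_iff_bounded ennreal_mult_less_top)
  finally show uv: "integrable lborel (\<lambda>pq. u (fst pq) * v (snd pq))"
    using uv_measurable by (intro integrableI_bounded) auto
  have "(\<integral>pq. u (fst pq) * v (snd pq) \<partial>lborel) = (\<integral>pq. u (fst pq) * v (snd pq) \<partial>(lborel \<Otimes>\<^sub>M lborel))"
    by (simp only: lborel_prod)
  also have "\<dots> = (\<integral>p. \<integral>q. u p * v q \<partial>lborel \<partial>lborel)"
    using lborel_pair.integral_fst'[of "\<lambda>pq. u (fst pq) * v (snd pq)"] uv by (simp add: lborel_prod)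
  also have "\<dots> = (\<integral>p. u p \<partial>lborel) * (\<integral>q. v q \<partial>lborel)" by simp
  finally show "(\<integral>pq. u (fst pq) * v (snd pq) \<partial>lborel) = (\<integral>p. u p \<partial>lborel) * (\<integral>q. v q \<partial>lborel)" .
qed

definition fourier :: "(real \<Rightarrow> real) \<Rightarrow> real \<Rightarrow> complex" where
  "fourier h \<xi> = (\<integral>k. complex_of_real (h k) * cis (- (k * \<xi>)) \<partial>lborel)"

lemma measurable_cis[measurable]: "cis \<in> borel_measurable borel"
  by (intro borel_measurable_continuous_onI continuous_on_cis continuous_on_id)

lemma integrable_fourier_integrand:
  fixes h :: "real \<Rightarrow> real" assumes "integrable lborel h"
  shows "integrable lborel (\<lambda>k. complex_of_real (h k) * cis (- (k * \<xi>)))"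
proof -
  have [measurable]: "h \<in> borel_measurable borel" using assms by (auto dest: borel_measurable_integrable)
  show ?thesis by (rule Bochner_Integration.integrable_bound[OF assms]) (auto simp: norm_mult)
qed

lemma norm_fourier_le_L1:
  assumes "integrable lborel h" "(\<integral>\<^sup>+k. ennreal \<bar>h k\<bar> \<partial>lborel) \<le> ennreal B" "0 \<le> B"
  shows "norm (fourier h \<xi>) \<le> B"
proof -
  have "ennreal (norm (fourier h \<xi>)) \<le> (\<integral>\<^sup>+k. norm (complex_of_real (h k) * cis (- (k * \<xi>))) \<partial>lborel)"
    unfolding fourier_def by (intro integral_norm_bound_ennreal integrable_fourier_integrand assms(1))
  also have "\<dots> = (\<integral>\<^sup>+k. ennreal \<bar>h k\<bar> \<partial>lborel)" by (simp add: norm_mult)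
  also have "\<dots> \<le> ennreal B" by (rule assms(2))
  finally show ?thesis using assms(3) by (simp add: ennreal_le_iff)
qed

lemma cis_minus_half_period:
  fixes \<zeta> :: real assumes "\<zeta> \<noteq> 0" shows "cis (- (pi / \<bar>\<zeta>\<bar> * \<zeta>)) = -1"
proof (cases "\<zeta> > 0")
  case True then show ?thesis by (simp add: cis.ctr complex_eq_iff)
next
  case False
  then have "pi / \<bar>\<zeta>\<bar> * \<zeta> = - pi" using assms by (simp add: field_simps)
  then show ?thesis by (simp add: cis.ctr complex_eq_iff)
qed

text \<open>Translating by half a period of \<open>cis (- k \<zeta>)\<close> flips its sign, so the Fourier transform
  only sees the difference of \<open>h\<close> and its translate.\<close>

lemma twice_fourier_eq_fourier_shift_diff:
  assumes h: "integrable lborel h" and \<zeta>: "\<zeta> \<noteq> 0"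
  shows "2 * fourier h \<zeta> = fourier (\<lambda>k. h k - h (k + pi / \<bar>\<zeta>\<bar>)) \<zeta>"
proof -
  define \<delta> where "\<delta> = pi / \<bar>\<zeta>\<bar>"
  define f where "f = (\<lambda>k. complex_of_real (h k) * cis (- (k * \<zeta>)))"
  have shifted: "integrable lborel (\<lambda>k. h (k + \<delta>))"
    using lborel_integrable_real_affine[OF h, of 1 \<delta>] by (simp add: add.commute)
  have "fourier h \<zeta> = (\<integral>k. f (\<delta> + 1 * k) \<partial>lborel)"
    unfolding fourier_def f_def[symmetric] by (subst lborel_integral_real_affine[of 1 _ \<delta>]) auto
  also have "\<dots> = (\<integral>k. - (complex_of_real (h (k + \<delta>)) * cis (- (k * \<zeta>))) \<partial>lborel)"
  proof (intro Bochner_Integration.integral_cong refl)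
    fix k
    have "cis (- ((\<delta> + 1 * k) * \<zeta>)) = cis (- (k * \<zeta>)) * cis (- (\<delta> * \<zeta>))"
      by (simp add: cis_mult algebra_simps)
    then show "f (\<delta> + 1 * k) = - (complex_of_real (h (k + \<delta>)) * cis (- (k * \<zeta>)))"
      unfolding f_def \<delta>_def cis_minus_half_period[OF \<zeta>] by (simp add: add.commute)
  qed
  also have "\<dots> = - fourier (\<lambda>k. h (k + \<delta>)) \<zeta>" by (simp add: fourier_def)
  finally have "2 * fourier h \<zeta> = fourier h \<zeta> - fourier (\<lambda>k. h (k + \<delta>)) \<zeta>" by simp
  also have "\<dots> = fourier (\<lambda>k. h k - h (k + \<delta>)) \<zeta>"
    unfolding fourier_def Bochner_Integration.integral_diff[OF integrable_fourier_integrand[OF h]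
        integrable_fourier_integrand[OF shifted], symmetric]
    by (simp add: algebra_simps)
  finally show ?thesis by (simp only: \<delta>_def)
qed

lemma abs_diff_le_by_deriv_bound:
  fixes h B :: "real \<Rightarrow> real"
  assumes hd: "\<And>v. v \<noteq> 0 \<Longrightarrow> \<exists>d. (h has_real_derivative d) (at v) \<and> \<bar>d\<bar> \<le> B \<bar>v\<bar>"
    and Bmono: "\<And>s s'. 0 < s \<Longrightarrow> s \<le> s' \<Longrightarrow> B s' \<le> B s"
    and ab: "a < b" "0 \<notin> {a..b}"
  shows "\<bar>h b - h a\<bar> \<le> (b - a) * B (min \<bar>a\<bar> \<bar>b\<bar>)"
proof -
  have deriv: "\<exists>d. (h has_real_derivative d) (at x) \<and> \<bar>d\<bar> \<le> B \<bar>x\<bar>" if "x \<in> {a..b}" for x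
  proof -
    have "x \<noteq> 0" using that ab by auto
    then show ?thesis by (rule hd)
  qed
  have "continuous_on {a..b} h"
    using deriv DERIV_isCont by (intro continuous_at_imp_continuous_on) blast
  moreover have "h differentiable (at x)" if "a < x" "x < b" for x
    using deriv[of x] that real_differentiable_def by auto
  ultimately obtain l z where z: "a < z" "z < b" "(h has_real_derivative l) (at z)" "h b - h a = (b - a) * l"
    using MVT[OF ab(1)] by blast
  obtain d where d: "(h has_real_derivative d) (at z)" "\<bar>d\<bar> \<le> B \<bar>z\<bar>" using deriv[of z] z by auto
  have "l = d" using DERIV_unique z(3) d(1) by blast
  have "min \<bar>a\<bar> \<bar>b\<bar> \<le> \<bar>z\<bar>" "0 < min \<bar>a\<bar> \<bar>b\<bar>" using z ab by auto
  then have "\<bar>d\<bar> \<le> B (min \<bar>a\<bar> \<bar>b\<bar>)" using d(2) Bmono by (meson order.trans)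
  then show ?thesis using z \<open>l = d\<close> ab by (simp add: abs_mult)
qed

text \<open>The reflected point is written as \<open>- \<delta> + (-1) * k\<close> to match \<open>nn_integral_real_affine\<close>.\<close>

lemma ennreal_abs_shift_diff_le:
  fixes h B :: "real \<Rightarrow> real"
  assumes hb: "\<And>k. \<bar>h k\<bar> \<le> H0"
    and hd: "\<And>v. v \<noteq> 0 \<Longrightarrow> \<exists>d. (h has_real_derivative d) (at v) \<and> \<bar>d\<bar> \<le> B \<bar>v\<bar>"
    and Bmono: "\<And>s s'. 0 < s \<Longrightarrow> s \<le> s' \<Longrightarrow> B s' \<le> B s"
    and \<delta>: "0 < \<delta>"
  shows "ennreal \<bar>h k - h (k + \<delta>)\<bar>
    \<le> ennreal \<delta> * (ennreal (B k) * indicator {0<..} k)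
      + ennreal \<delta> * (ennreal (B (- \<delta> + (-1) * k)) * indicator {0<..} (- \<delta> + (-1) * k))
      + ennreal (2 * H0) * indicator {-\<delta>..0} k"
proof -
  have mvt: "\<bar>h k - h (k + \<delta>)\<bar> \<le> \<delta> * B (min \<bar>k\<bar> \<bar>k + \<delta>\<bar>)" if "0 \<notin> {k..k + \<delta>}"
    using abs_diff_le_by_deriv_bound[OF hd Bmono, of k "k + \<delta>"] that \<delta> by (simp add: abs_minus_commute)
  consider "k > 0" | "k < - \<delta>" | "k \<in> {-\<delta>..0}" by force
  then show ?thesis
  proof cases
    case 1
    then have range: "0 \<notin> {k..k + \<delta>}" and m: "min \<bar>k\<bar> \<bar>k + \<delta>\<bar> = k" using \<delta> by auto
    have "\<bar>h k - h (k + \<delta>)\<bar> \<le> \<delta> * B k" using mvt[OF range] unfolding m .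
    then have "ennreal \<bar>h k - h (k + \<delta>)\<bar> \<le> ennreal \<delta> * ennreal (B k)"
      by (simp add: ennreal_mult'[symmetric] ennreal_leI \<delta> less_imp_le)
    then show ?thesis using 1 \<delta> by (simp add: indicator_def)
  next
    case 2
    then have range: "0 \<notin> {k..k + \<delta>}" and m: "min \<bar>k\<bar> \<bar>k + \<delta>\<bar> = - \<delta> + (-1) * k"
      using \<delta> by auto
    have "\<bar>h k - h (k + \<delta>)\<bar> \<le> \<delta> * B (- \<delta> + (-1) * k)" using mvt[OF range] unfolding m .
    then have "ennreal \<bar>h k - h (k + \<delta>)\<bar> \<le> ennreal \<delta> * ennreal (B (- \<delta> + (-1) * k))"
      by (simp add: ennreal_mult'[symmetric] ennreal_leI \<delta> less_imp_le)
    then show ?thesis using 2 \<delta> by (simp add: indicator_def)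
  next
    case 3
    have "\<bar>h k - h (k + \<delta>)\<bar> \<le> 2 * H0" using hb[of k] hb[of "k + \<delta>"] by linarith
    then show ?thesis using 3 by (simp add: indicator_def ennreal_leI)
  qed
qed

lemma nn_integral_abs_shift_diff_le:
  fixes h B :: "real \<Rightarrow> real"
  assumes hb: "\<And>k. \<bar>h k\<bar> \<le> H0"
    and hd: "\<And>v. v \<noteq> 0 \<Longrightarrow> \<exists>d. (h has_real_derivative d) (at v) \<and> \<bar>d\<bar> \<le> B \<bar>v\<bar>"
    and [measurable]: "B \<in> borel_measurable borel"
    and Bmono: "\<And>s s'. 0 < s \<Longrightarrow> s \<le> s' \<Longrightarrow> B s' \<le> B s"
    and IB: "(\<integral>\<^sup>+s. ennreal (B s) * indicator {0<..} s \<partial>lborel) \<le> ennreal IB" "0 \<le> IB"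
    and \<delta>: "0 < \<delta>"
  shows "(\<integral>\<^sup>+k. ennreal \<bar>h k - h (k + \<delta>)\<bar> \<partial>lborel) \<le> ennreal (\<delta> * (2 * H0 + 2 * IB))"
proof -
  have H0: "0 \<le> H0" using hb[of 0] by linarith
  have "(\<integral>\<^sup>+k. ennreal \<bar>h k - h (k + \<delta>)\<bar> \<partial>lborel)
      \<le> (\<integral>\<^sup>+k. ennreal \<delta> * (ennreal (B k) * indicator {0<..} k)
         + ennreal \<delta> * (ennreal (B (- \<delta> + (-1) * k)) * indicator {0<..} (- \<delta> + (-1) * k))
         + ennreal (2 * H0) * indicator {-\<delta>..0} k \<partial>lborel)"
    by (intro nn_integral_mono ennreal_abs_shift_diff_le[OF hb hd Bmono \<delta>])
  also have "\<dots> = ennreal \<delta> * (\<integral>\<^sup>+k. ennreal (B k) * indicator {0<..} k \<partial>lborel)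
      + ennreal \<delta> * (\<integral>\<^sup>+k. ennreal (B (- \<delta> + (-1) * k)) * indicator {0<..} (- \<delta> + (-1) * k) \<partial>lborel)
      + ennreal (2 * H0) * emeasure lborel {-\<delta>..0}"
    by (simp add: nn_integral_add nn_integral_cmult)
  also have "(\<integral>\<^sup>+k. ennreal (B (- \<delta> + (-1) * k)) * indicator {0<..} (- \<delta> + (-1) * k) \<partial>lborel)
      = (\<integral>\<^sup>+k. ennreal (B k) * indicator {0<..} k \<partial>lborel)"
    using nn_integral_real_affine[of "\<lambda>k. ennreal (B k) * indicator {0<..} k" "-1" "-\<delta>"] by simp
  also have "emeasure lborel {-\<delta>..0} = ennreal \<delta>" using \<delta> by simp
  also have "ennreal \<delta> * (\<integral>\<^sup>+k. ennreal (B k) * indicator {0<..} k \<partial>lborel)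
      + ennreal \<delta> * (\<integral>\<^sup>+k. ennreal (B k) * indicator {0<..} k \<partial>lborel) + ennreal (2 * H0) * ennreal \<delta>
      \<le> ennreal \<delta> * ennreal IB + ennreal \<delta> * ennreal IB + ennreal (2 * H0) * ennreal \<delta>"
    by (intro add_mono mult_left_mono IB order.refl) auto
  also have "\<dots> = ennreal (\<delta> * (2 * H0 + 2 * IB))"
    using \<delta> H0 IB by (simp add: ennreal_mult[symmetric] ennreal_plus[symmetric] algebra_simps del: ennreal_plus)
  finally show ?thesis .
qed

lemma norm_fourier_le_deriv_bound:
  fixes h B :: "real \<Rightarrow> real"
  assumes h: "integrable lborel h" and hb: "\<And>k. \<bar>h k\<bar> \<le> H0"
    and hd: "\<And>v. v \<noteq> 0 \<Longrightarrow> \<exists>d. (h has_real_derivative d) (at v) \<and> \<bar>d\<bar> \<le> B \<bar>v\<bar>"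
    and Bm: "B \<in> borel_measurable borel"
    and Bmono: "\<And>s s'. 0 < s \<Longrightarrow> s \<le> s' \<Longrightarrow> B s' \<le> B s"
    and IB: "(\<integral>\<^sup>+s. ennreal (B s) * indicator {0<..} s \<partial>lborel) \<le> ennreal IB" "0 \<le> IB"
    and \<zeta>: "\<zeta> \<noteq> 0"
  shows "norm (fourier h \<zeta>) \<le> pi / \<bar>\<zeta>\<bar> * (H0 + IB)"
proof -
  define \<delta> where "\<delta> = pi / \<bar>\<zeta>\<bar>"
  have \<delta>: "0 < \<delta>" using \<zeta> by (simp add: \<delta>_def)
  have H0: "0 \<le> H0" using hb[of 0] by linarith
  have "integrable lborel (\<lambda>k. h (\<delta> + 1 * k))" by (rule lborel_integrable_real_affine[OF h]) simp
  then have diff: "integrable lborel (\<lambda>k. h k - h (k + \<delta>))"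
    using h by (simp add: add.commute)
  have "2 * norm (fourier h \<zeta>) = norm (2 * fourier h \<zeta>)" by (simp add: norm_mult)
  also have "\<dots> = norm (fourier (\<lambda>k. h k - h (k + \<delta>)) \<zeta>)"
    using twice_fourier_eq_fourier_shift_diff[OF h \<zeta>] by (simp add: \<delta>_def)
  also have "\<dots> \<le> \<delta> * (2 * H0 + 2 * IB)"
    using \<delta> H0 IB
    by (intro norm_fourier_le_L1 diff nn_integral_abs_shift_diff_le[OF hb hd Bm Bmono IB \<delta>]) auto
  also have "\<dots> = 2 * (\<delta> * (H0 + IB))" by (simp add: algebra_simps)
  finally show ?thesis by (simp add: \<delta>_def)
qed

lemma gaussian_deriv_bound:
  assumes t: "0 < t" and v: "v \<noteq> 0"
  shows "\<exists>d. (gaussian t has_real_derivative d) (at v) \<and> \<bar>d\<bar> \<le> min (2 * sqrt t) ((2 / sqrt t) / \<bar>v\<bar>\<^sup>2)"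
proof (intro exI conjI)
  show "(gaussian t has_real_derivative (exp (- t * v\<^sup>2) * (- t * (2 * v)))) (at v)"
    unfolding gaussian_def by (auto intro!: derivative_eq_intros simp: power2_eq_square)
  define u where "u = sqrt t"
  have u: "0 < u" "t = u\<^sup>2" using t by (auto simp: u_def)
  define \<sigma> where "\<sigma> = u * \<bar>v\<bar>"
  have \<sigma>: "0 \<le> \<sigma>" "\<sigma>\<^sup>2 = t * v\<^sup>2" using u by (auto simp: \<sigma>_def power_mult_distrib)
  have eq: "\<bar>exp (- t * v\<^sup>2) * (- t * (2 * v))\<bar> = 2 * t * \<bar>v\<bar> * exp (- \<sigma>\<^sup>2)"
    using t by (simp add: \<sigma> abs_mult)
  have "2 * t * \<bar>v\<bar> * exp (- \<sigma>\<^sup>2) = 2 * u * (\<sigma> * exp (- \<sigma>\<^sup>2))"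
    using u by (simp add: \<sigma>_def power2_eq_square)
  also have "\<dots> \<le> 2 * u" using u mult_exp_neg_square_le_1[OF \<sigma>(1)] by simp
  finally have A: "2 * t * \<bar>v\<bar> * exp (- \<sigma>\<^sup>2) \<le> 2 * sqrt t" by (simp add: u_def)
  have "2 * t * \<bar>v\<bar> * exp (- \<sigma>\<^sup>2) = (2 / u) / \<bar>v\<bar>\<^sup>2 * (\<sigma> ^ 3 * exp (- \<sigma>\<^sup>2))"
    using u v by (simp add: \<sigma>_def field_simps power2_eq_square power3_eq_cube)
  also have "\<dots> \<le> (2 / u) / \<bar>v\<bar>\<^sup>2" using u cube_mult_exp_neg_square_le_1[OF \<sigma>(1)] by (intro mult_left_le) auto
  finally have B: "2 * t * \<bar>v\<bar> * exp (- \<sigma>\<^sup>2) \<le> (2 / sqrt t) / \<bar>v\<bar>\<^sup>2" by (simp add: u_def)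
  show "\<bar>exp (- t * v\<^sup>2) * (- t * (2 * v))\<bar> \<le> min (2 * sqrt t) ((2 / sqrt t) / \<bar>v\<bar>\<^sup>2)"
    using A B eq by simp
qed

lemma norm_fourier_gaussian_le:
  assumes "0 < t" shows "norm (fourier (gaussian t) \<xi>) \<le> sqrt (pi / t)"
  using assms
  by (intro norm_fourier_le_L1 integrable_gaussian)
    (simp_all add: abs_of_pos gaussian_pos nn_integral_gaussian)

lemma norm_fourier_gaussian_decay:
  assumes t: "0 < t" and \<xi>: "\<xi> \<noteq> 0" shows "norm (fourier (gaussian t) \<xi>) \<le> 5 * pi / \<bar>\<xi>\<bar>"
proof -
  have "norm (fourier (gaussian t) \<xi>) \<le> pi / \<bar>\<xi>\<bar> * (1 + 4)"
  proof (rule norm_fourier_le_deriv_bound[where B = "\<lambda>s. min (2 * sqrt t) ((2 / sqrt t) / s\<^sup>2)"])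
    show "integrable lborel (gaussian t)" by (rule integrable_gaussian[OF t])
    show "\<bar>gaussian t k\<bar> \<le> 1" for k using t by (simp add: gaussian_def)
    show "\<exists>d. (gaussian t has_real_derivative d) (at v) \<and> \<bar>d\<bar> \<le> min (2 * sqrt t) ((2 / sqrt t) / \<bar>v\<bar>\<^sup>2)"
      if "v \<noteq> 0" for v
      using gaussian_deriv_bound[OF t that] .
    show "min (2 * sqrt t) ((2 / sqrt t) / s'\<^sup>2) \<le> min (2 * sqrt t) ((2 / sqrt t) / s\<^sup>2)"
      if "0 < s" "s \<le> s'" for s s'
      using that t by (intro min_divide_square_antimono) auto
    have "(\<integral>\<^sup>+s. ennreal (min (2 * sqrt t) ((2 / sqrt t) / s\<^sup>2)) * indicator {0<..} s \<partial>lborel)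
        \<le> ennreal (2 * sqrt t * (1 / sqrt t) + (2 / sqrt t) / (1 / sqrt t))"
      using t by (intro nn_integral_min_inverse_square_le) auto
    also have "2 * sqrt t * (1 / sqrt t) + (2 / sqrt t) / (1 / sqrt t) = 4" using t by simp
    finally show "(\<integral>\<^sup>+s. ennreal (min (2 * sqrt t) ((2 / sqrt t) / s\<^sup>2)) * indicator {0<..} s \<partial>lborel)
        \<le> ennreal 4" .
  qed (use \<xi> in auto)
  then show ?thesis by (simp add: mult.commute)
qed

text \<open>In momentum space the lattice enters through the form factor, which comes from averaging
  over a cell of side \<open>\<epsilon>\<close>, and through the symbol of the discrete Laplacian.\<close>

definition form_factor :: "real \<Rightarrow> real \<Rightarrow> real" where
  "form_factor \<epsilon> k = (sin (\<epsilon> * k / 2))\<^sup>2 / (\<epsilon>\<^sup>2 * k\<^sup>2)"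

definition lattice_symbol :: "real \<Rightarrow> real \<Rightarrow> real" where
  "lattice_symbol \<epsilon> k = 4 / \<epsilon>\<^sup>2 * (sin (\<epsilon> * k / 2))\<^sup>2"

definition lattice_heat :: "real \<Rightarrow> real \<Rightarrow> real \<Rightarrow> real" where
  "lattice_heat \<epsilon> t k = form_factor \<epsilon> k * exp (- t * lattice_symbol \<epsilon> k)"

lemma form_factor_measurable[measurable]: "form_factor \<epsilon> \<in> borel_measurable borel"
  unfolding form_factor_def by measurable

lemma lattice_symbol_measurable[measurable]: "lattice_symbol \<epsilon> \<in> borel_measurable borel"
  unfolding lattice_symbol_def by measurable

lemma lattice_heat_measurable[measurable]: "lattice_heat \<epsilon> t \<in> borel_measurable borel"
  unfolding lattice_heat_def by measurable

lemma form_factor_nonneg: "0 \<le> form_factor \<epsilon> k"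
  by (simp add: form_factor_def)

lemma lattice_symbol_nonneg: "0 \<le> lattice_symbol \<epsilon> k"
  by (simp add: lattice_symbol_def)

lemma lattice_heat_nonneg: "0 \<le> lattice_heat \<epsilon> t k"
  by (simp add: lattice_heat_def form_factor_nonneg)

lemma form_factor_le_quarter:
  assumes "0 < \<epsilon>" shows "form_factor \<epsilon> k \<le> 1 / 4"
proof (cases "k = 0")
  case False
  have "(sin (\<epsilon> * k / 2))\<^sup>2 \<le> (\<epsilon> * k / 2)\<^sup>2"
    using abs_le_square_iff[THEN iffD1, OF abs_sin_x_le_abs_x[of "\<epsilon> * k / 2"]] .
  then show ?thesis using False assms by (simp add: form_factor_def field_simps power_mult_distrib)
qed (simp add: form_factor_def)

lemma form_factor_le_inverse_square:
  assumes "0 < \<epsilon>" shows "form_factor \<epsilon> k \<le> (1 / \<epsilon>\<^sup>2) / k\<^sup>2"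
proof (cases "k = 0")
  case False
  have "(sin (\<epsilon> * k / 2))\<^sup>2 \<le> 1" by (simp add: abs_square_le_1)
  then show ?thesis using False assms by (simp add: form_factor_def divide_right_mono)
qed (simp add: form_factor_def)

lemma form_factor_eq_lattice_symbol: "form_factor \<epsilon> k = lattice_symbol \<epsilon> k / (4 * k\<^sup>2)"
  by (cases "k = 0"; cases "\<epsilon> = 0") (simp_all add: form_factor_def lattice_symbol_def field_simps)

lemma half_square_le_lattice_symbol:
  assumes "0 < \<epsilon>" "\<bar>\<epsilon> * k\<bar> \<le> 2" shows "k\<^sup>2 / 2 \<le> lattice_symbol \<epsilon> k"
proof -
  have "(\<epsilon> * k / 2)\<^sup>2 / 2 \<le> (sin (\<epsilon> * k / 2))\<^sup>2" using assms by (intro half_square_le_sin_square) simp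
  then have "4 / \<epsilon>\<^sup>2 * ((\<epsilon> * k / 2)\<^sup>2 / 2) \<le> 4 / \<epsilon>\<^sup>2 * (sin (\<epsilon> * k / 2))\<^sup>2"
    by (intro mult_left_mono) auto
  then show ?thesis using assms by (simp add: lattice_symbol_def power_mult_distrib power_divide)
qed

lemma lattice_heat_le_form_factor:
  assumes "0 \<le> t" shows "lattice_heat \<epsilon> t k \<le> form_factor \<epsilon> k"
proof -
  have "exp (- t * lattice_symbol \<epsilon> k) \<le> 1" using assms lattice_symbol_nonneg[of \<epsilon> k] by simp
  then show ?thesis unfolding lattice_heat_def using form_factor_nonneg[of \<epsilon> k] by (simp add: mult_left_le)
qed

lemma nn_integral_lattice_heat_le:
  assumes "0 < \<epsilon>" "0 \<le> t"
  shows "(\<integral>\<^sup>+k. ennreal (lattice_heat \<epsilon> t k) \<partial>lborel) \<le> ennreal (2 / \<epsilon>)"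
proof -
  define F where "F = (\<lambda>s::real. ennreal (min (1 / 4) ((1 / \<epsilon>\<^sup>2) / s\<^sup>2)))"
  have [measurable]: "F \<in> borel_measurable borel" unfolding F_def by measurable
  have "(\<integral>\<^sup>+k. ennreal (lattice_heat \<epsilon> t k) \<partial>lborel) \<le> (\<integral>\<^sup>+k. F \<bar>k\<bar> \<partial>lborel)"
  proof (intro nn_integral_mono)
    fix k
    have "lattice_heat \<epsilon> t k \<le> min (1 / 4) ((1 / \<epsilon>\<^sup>2) / k\<^sup>2)"
      using lattice_heat_le_form_factor[OF assms(2)] form_factor_le_quarter[OF assms(1)]
        form_factor_le_inverse_square[OF assms(1)] by (meson min.bounded_iff order.trans)
    then show "ennreal (lattice_heat \<epsilon> t k) \<le> F \<bar>k\<bar>" by (simp add: F_def)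
  qed
  also have "\<dots> = 2 * (\<integral>\<^sup>+s. F s * indicator {0<..} s \<partial>lborel)"
    by (rule nn_integral_abs_eq_twice_pos) measurable
  also have "\<dots> \<le> 2 * ennreal (1 / 4 * (2 / \<epsilon>) + (1 / \<epsilon>\<^sup>2) / (2 / \<epsilon>))"
    unfolding F_def by (intro mult_left_mono nn_integral_min_inverse_square_le) (use assms in auto)
  also have "1 / 4 * (2 / \<epsilon>) + (1 / \<epsilon>\<^sup>2) / (2 / \<epsilon>) = 1 / \<epsilon>"
    using assms by (simp add: power2_eq_square field_simps)
  also have "2 * ennreal (1 / \<epsilon>) = ennreal (2 / \<epsilon>)"
    by (metis ennreal_mult' ennreal_numeral times_divide_eq_right mult_1_right zero_le_numeral)
  finally show ?thesis .
qed

lemma integrable_lattice_heat: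
  assumes "0 < \<epsilon>" "0 \<le> t" shows "integrable lborel (lattice_heat \<epsilon> t)"
proof (rule integrableI_bounded)
  have "(\<integral>\<^sup>+k. ennreal (norm (lattice_heat \<epsilon> t k)) \<partial>lborel) \<le> ennreal (2 / \<epsilon>)"
    using nn_integral_lattice_heat_le[OF assms] by (simp add: lattice_heat_nonneg)
  then show "(\<integral>\<^sup>+k. ennreal (norm (lattice_heat \<epsilon> t k)) \<partial>lborel) < \<infinity>"
    by (rule le_less_trans) simp
qed simp

text \<open>Away from \<open>|\<epsilon> k| \<le> 2\<close> the symbol is no longer comparable to \<open>k\<^sup>2\<close>, and the decay in \<open>k\<close>
  comes from \<open>s e\<^sup>-\<^sup>s \<le> 1\<close> applied to \<open>s = t \<cdot> lattice_symbol \<epsilon> k\<close> instead.\<close>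

lemma lattice_heat_le_gaussian_plus_tail:
  assumes "0 < \<epsilon>" "0 < t"
  shows "ennreal (lattice_heat \<epsilon> t k)
    \<le> ennreal (1 / 4) * ennreal (gaussian (t / 2) k)
      + ennreal (1 / (4 * t)) * ennreal (indicator {2 / \<epsilon>..} \<bar>k\<bar> * \<bar>k\<bar> powr (-2))"
proof (cases "\<bar>\<epsilon> * k\<bar> \<le> 2")
  case True
  have "- t * lattice_symbol \<epsilon> k \<le> - (t / 2) * k\<^sup>2"
    using half_square_le_lattice_symbol[OF assms(1) True] assms(2) by simp
  then have "exp (- t * lattice_symbol \<epsilon> k) \<le> gaussian (t / 2) k" by (simp add: gaussian_def)
  then have "lattice_heat \<epsilon> t k \<le> 1 / 4 * gaussian (t / 2) k"
    unfolding lattice_heat_def using form_factor_le_quarter[OF assms(1)] form_factor_nonneg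
    by (intro mult_mono) auto
  then have "ennreal (lattice_heat \<epsilon> t k) \<le> ennreal (1 / 4) * ennreal (gaussian (t / 2) k)"
    by (simp add: ennreal_mult[symmetric] gaussian_pos less_imp_le)
  then show ?thesis by (rule order.trans) simp
next
  case False
  then have k: "2 / \<epsilon> \<le> \<bar>k\<bar>" "k \<noteq> 0" using assms by (auto simp: abs_mult field_simps)
  have "lattice_heat \<epsilon> t k
      = (t * lattice_symbol \<epsilon> k * exp (- (t * lattice_symbol \<epsilon> k))) / (4 * t * k\<^sup>2)"
    using assms k by (simp add: lattice_heat_def form_factor_eq_lattice_symbol field_simps)
  also have "\<dots> \<le> 1 / (4 * t * k\<^sup>2)"
    using assms k mult_exp_neg_le_1[of "t * lattice_symbol \<epsilon> k"] lattice_symbol_nonneg[of \<epsilon> k]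
    by (intro divide_right_mono) auto
  also have "\<dots> = 1 / (4 * t) * (indicator {2 / \<epsilon>..} \<bar>k\<bar> * \<bar>k\<bar> powr (-2))"
    using k by (simp add: indicator_def powr_minus powr_numeral field_simps power2_abs)
  finally have "ennreal (lattice_heat \<epsilon> t k)
      \<le> ennreal (1 / (4 * t)) * ennreal (indicator {2 / \<epsilon>..} \<bar>k\<bar> * \<bar>k\<bar> powr (-2))"
    using assms by (simp add: ennreal_mult[symmetric])
  then show ?thesis by (rule order.trans) simp
qed

lemma nn_integral_lattice_heat_le_long_time:
  assumes e: "0 < \<epsilon>" and t: "\<epsilon>\<^sup>2 \<le> t"
  shows "(\<integral>\<^sup>+k. ennreal (lattice_heat \<epsilon> t k) \<partial>lborel) \<le> ennreal (1 / sqrt t)"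
proof -
  define u where "u = sqrt t"
  have "0 < t" using zero_less_power[OF e, of 2] t by linarith
  then have u: "0 < u" "t = u\<^sup>2" "\<epsilon> \<le> u"
    using t by (auto simp: u_def real_le_rsqrt)
  have "(\<integral>\<^sup>+k. ennreal (lattice_heat \<epsilon> t k) \<partial>lborel)
      \<le> (\<integral>\<^sup>+k. ennreal (1 / 4) * ennreal (gaussian (t / 2) k)
          + ennreal (1 / (4 * t)) * ennreal (indicator {2 / \<epsilon>..} \<bar>k\<bar> * \<bar>k\<bar> powr (-2)) \<partial>lborel)"
    using e u by (intro nn_integral_mono lattice_heat_le_gaussian_plus_tail) auto
  also have "\<dots> = ennreal (1 / 4) * ennreal (sqrt (pi / (t / 2))) + ennreal (1 / (4 * t)) * ennreal (2 / (2 / \<epsilon>))"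
    using e u by (simp add: nn_integral_add nn_integral_cmult nn_integral_gaussian
        nn_integral_abs_powr_minus_2_atLeast del: ennreal_numeral)
  also have "\<dots> = ennreal (sqrt (2 * pi) / (4 * u) + \<epsilon> / (4 * u\<^sup>2))"
    using e u by (simp add: ennreal_mult[symmetric] ennreal_plus[symmetric] real_sqrt_divide
        real_sqrt_mult del: ennreal_plus ennreal_numeral)
  also have "\<dots> \<le> ennreal (1 / sqrt t)"
  proof (intro ennreal_leI)
    have "sqrt (2 * pi) \<le> sqrt (3\<^sup>2)" using pi_less_4 by (intro real_sqrt_le_mono) simp
    then have "sqrt (2 * pi) / (4 * u) \<le> 3 / (4 * u)" using u by (intro divide_right_mono) auto
    moreover have "\<epsilon> / (4 * u\<^sup>2) \<le> 1 / (4 * u)" using u by (simp add: field_simps power2_eq_square)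
    ultimately have "sqrt (2 * pi) / (4 * u) + \<epsilon> / (4 * u\<^sup>2) \<le> 3 / (4 * u) + 1 / (4 * u)"
      by linarith
    also have "\<dots> = 1 / sqrt t" using u(1) unfolding u_def by (simp add: field_simps)
    finally show "sqrt (2 * pi) / (4 * u) + \<epsilon> / (4 * u\<^sup>2) \<le> 1 / sqrt t" .
  qed
  finally show ?thesis .
qed

lemma form_factor_deriv:
  assumes "0 < \<epsilon>" "v \<noteq> 0"
  shows "(form_factor \<epsilon> has_real_derivative
     (\<epsilon> * v * sin (\<epsilon> * v / 2) * cos (\<epsilon> * v / 2) - 2 * (sin (\<epsilon> * v / 2))\<^sup>2) / (\<epsilon>\<^sup>2 * v ^ 3)) (at v)"
  unfolding form_factor_def[abs_def]
  using assms by (auto intro!: derivative_eq_intros simp: field_simps power2_eq_square power3_eq_cube)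

lemma lattice_symbol_deriv:
  assumes "0 < \<epsilon>"
  shows "(lattice_symbol \<epsilon> has_real_derivative 4 / \<epsilon> * sin (\<epsilon> * v / 2) * cos (\<epsilon> * v / 2)) (at v)"
  unfolding lattice_symbol_def[abs_def]
  using assms by (auto intro!: derivative_eq_intros simp: field_simps power2_eq_square)

lemma abs_form_factor_deriv_le:
  fixes \<epsilon> v :: real assumes "0 < \<epsilon>" "v \<noteq> 0"
  shows "\<bar>(\<epsilon> * v * sin (\<epsilon> * v / 2) * cos (\<epsilon> * v / 2) - 2 * (sin (\<epsilon> * v / 2))\<^sup>2) / (\<epsilon>\<^sup>2 * v ^ 3)\<bar>
     \<le> min (\<epsilon> / 2) ((2 / \<epsilon>) / \<bar>v\<bar>\<^sup>2)"
proof -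
  define w where "w = \<epsilon> * v / 2"
  have w: "w \<noteq> 0" using assms by (simp add: w_def)
  have "(\<epsilon> * v * sin (\<epsilon> * v / 2) * cos (\<epsilon> * v / 2) - 2 * (sin (\<epsilon> * v / 2))\<^sup>2) / (\<epsilon>\<^sup>2 * v ^ 3)
      = \<epsilon> / 2 * (sin w * (w * cos w - sin w) / (2 * w ^ 3))"
    using assms by (simp add: w_def field_simps power2_eq_square power3_eq_cube)
  then have "\<bar>(\<epsilon> * v * sin (\<epsilon> * v / 2) * cos (\<epsilon> * v / 2) - 2 * (sin (\<epsilon> * v / 2))\<^sup>2) / (\<epsilon>\<^sup>2 * v ^ 3)\<bar>
      = \<epsilon> / 2 * \<bar>sin w * (w * cos w - sin w) / (2 * w ^ 3)\<bar>"
    using assms by (simp add: abs_mult)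
  also have "\<dots> \<le> \<epsilon> / 2 * min 1 (1 / w\<^sup>2)"
    using abs_sinc_square_deriv_le[OF w] assms by (intro mult_left_mono) auto
  also have "\<epsilon> / 2 * (1 / w\<^sup>2) = (2 / \<epsilon>) / \<bar>v\<bar>\<^sup>2"
    using assms by (simp add: w_def field_simps power2_eq_square)
  then have "\<epsilon> / 2 * min 1 (1 / w\<^sup>2) = min (\<epsilon> / 2) ((2 / \<epsilon>) / \<bar>v\<bar>\<^sup>2)"
    using assms by (simp add: min_mult_distrib_left)
  finally show ?thesis .
qed

lemma form_factor_mult_abs_deriv_exp_le:
  assumes e: "0 < \<epsilon>" and t: "0 < t" and v: "v \<noteq> 0"
  shows "form_factor \<epsilon> v * exp (- t * lattice_symbol \<epsilon> v) * t * \<bar>4 / \<epsilon> * sin (\<epsilon> * v / 2) * cos (\<epsilon> * v / 2)\<bar>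
     \<le> min (sqrt t / 2) ((1 / (2 * sqrt t)) / \<bar>v\<bar>\<^sup>2)"
proof -
  define S where "S = \<bar>sin (\<epsilon> * v / 2)\<bar>"
  define u where "u = sqrt t"
  define \<sigma> where "\<sigma> = 2 * u * S / \<epsilon>"
  have u: "0 < u" "t = u\<^sup>2" using t by (auto simp: u_def)
  have S: "0 \<le> S" by (simp add: S_def)
  have \<sigma>: "0 \<le> \<sigma>" using u e S by (simp add: \<sigma>_def)
  have "t * lattice_symbol \<epsilon> v = \<sigma>\<^sup>2"
    using u e by (simp add: lattice_symbol_def \<sigma>_def S_def power_mult_distrib power_divide field_simps)
  then have exp_eq: "exp (- t * lattice_symbol \<epsilon> v) = exp (- \<sigma>\<^sup>2)" by (metis minus_mult_left)
  have "\<bar>4 / \<epsilon> * sin (\<epsilon> * v / 2) * cos (\<epsilon> * v / 2)\<bar> = 4 / \<epsilon> * S * \<bar>cos (\<epsilon> * v / 2)\<bar>"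
    using e by (simp add: abs_mult S_def)
  also have "\<dots> \<le> 4 / \<epsilon> * S" using e S by (intro mult_left_le) auto
  finally have "form_factor \<epsilon> v * exp (- t * lattice_symbol \<epsilon> v) * t * \<bar>4 / \<epsilon> * sin (\<epsilon> * v / 2) * cos (\<epsilon> * v / 2)\<bar>
      \<le> form_factor \<epsilon> v * exp (- \<sigma>\<^sup>2) * t * (4 / \<epsilon> * S)"
    unfolding exp_eq by (intro mult_left_mono) (use t form_factor_nonneg[of \<epsilon> v] in auto)
  moreover have "form_factor \<epsilon> v * exp (- \<sigma>\<^sup>2) * t * (4 / \<epsilon> * S) \<le> sqrt t / 2"
  proof -
    have "form_factor \<epsilon> v * exp (- \<sigma>\<^sup>2) * t * (4 / \<epsilon> * S) \<le> 1 / 4 * exp (- \<sigma>\<^sup>2) * t * (4 / \<epsilon> * S)"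
      using form_factor_le_quarter[OF e] t e S by (intro mult_right_mono) auto
    also have "\<dots> = u / 2 * (\<sigma> * exp (- \<sigma>\<^sup>2))" using u e by (simp add: \<sigma>_def field_simps power2_eq_square)
    also have "\<dots> \<le> u / 2" using u mult_exp_neg_square_le_1[OF \<sigma>] by (intro mult_left_le) auto
    finally show ?thesis by (simp add: u_def)
  qed
  moreover have "form_factor \<epsilon> v * exp (- \<sigma>\<^sup>2) * t * (4 / \<epsilon> * S) \<le> (1 / (2 * sqrt t)) / \<bar>v\<bar>\<^sup>2"
  proof -
    have "form_factor \<epsilon> v * exp (- \<sigma>\<^sup>2) * t * (4 / \<epsilon> * S) = (1 / (2 * u)) / \<bar>v\<bar>\<^sup>2 * (\<sigma> ^ 3 * exp (- \<sigma>\<^sup>2))"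
      using u e v by (simp add: form_factor_def S_def \<sigma>_def field_simps power2_eq_square power3_eq_cube)
    also have "\<dots> \<le> (1 / (2 * u)) / \<bar>v\<bar>\<^sup>2"
      using u cube_mult_exp_neg_square_le_1[OF \<sigma>] by (intro mult_left_le) auto
    finally show ?thesis by (simp add: u_def)
  qed
  ultimately show ?thesis by (meson min.boundedI order.trans)
qed

lemma lattice_heat_deriv_bound:
  assumes e: "0 < \<epsilon>" and t: "0 < t" and v: "v \<noteq> 0"
  shows "\<exists>d. (lattice_heat \<epsilon> t has_real_derivative d) (at v) \<and>
     \<bar>d\<bar> \<le> min (\<epsilon> / 2) ((2 / \<epsilon>) / \<bar>v\<bar>\<^sup>2) + min (sqrt t / 2) ((1 / (2 * sqrt t)) / \<bar>v\<bar>\<^sup>2)"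
proof -
  define g' where "g' = (\<epsilon> * v * sin (\<epsilon> * v / 2) * cos (\<epsilon> * v / 2) - 2 * (sin (\<epsilon> * v / 2))\<^sup>2) / (\<epsilon>\<^sup>2 * v ^ 3)"
  define W' where "W' = 4 / \<epsilon> * sin (\<epsilon> * v / 2) * cos (\<epsilon> * v / 2)"
  define E where "E = exp (- t * lattice_symbol \<epsilon> v)"
  have E: "0 < E" "E \<le> 1" using t lattice_symbol_nonneg[of \<epsilon> v] by (auto simp: E_def)
  have "((\<lambda>k. form_factor \<epsilon> k * exp (- t * lattice_symbol \<epsilon> k)) has_real_derivative
      g' * E + form_factor \<epsilon> v * (E * (- t * W'))) (at v)"
    using form_factor_deriv[OF e v] lattice_symbol_deriv[OF e, of v] unfolding g'_def W'_def E_def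
    by (auto intro!: derivative_eq_intros)
  then have deriv: "(lattice_heat \<epsilon> t has_real_derivative g' * E + form_factor \<epsilon> v * (E * (- t * W'))) (at v)"
    by (simp add: lattice_heat_def[abs_def])
  have "\<bar>g' * E + form_factor \<epsilon> v * (E * (- t * W'))\<bar> \<le> \<bar>g'\<bar> * E + form_factor \<epsilon> v * E * t * \<bar>W'\<bar>"
    using E t form_factor_nonneg[of \<epsilon> v] abs_triangle_ineq[of "g' * E" "form_factor \<epsilon> v * (E * (- t * W'))"]
    by (simp add: abs_mult mult.assoc)
  also have "\<dots> \<le> \<bar>g'\<bar> + form_factor \<epsilon> v * E * t * \<bar>W'\<bar>"
    using E by (simp add: mult_left_le)
  also have "\<dots> \<le> min (\<epsilon> / 2) ((2 / \<epsilon>) / \<bar>v\<bar>\<^sup>2) + min (sqrt t / 2) ((1 / (2 * sqrt t)) / \<bar>v\<bar>\<^sup>2)"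
    using abs_form_factor_deriv_le[OF e v] form_factor_mult_abs_deriv_exp_le[OF e t v]
    unfolding g'_def W'_def E_def by (intro add_mono) auto
  finally show ?thesis using deriv by blast
qed

lemma norm_fourier_lattice_heat_le:
  assumes "0 < \<epsilon>" "0 \<le> t" shows "norm (fourier (lattice_heat \<epsilon> t) \<zeta>) \<le> 2 / \<epsilon>"
  using assms
  by (intro norm_fourier_le_L1 integrable_lattice_heat)
    (simp_all add: lattice_heat_nonneg nn_integral_lattice_heat_le)

lemma norm_fourier_lattice_heat_le_long_time:
  assumes "0 < \<epsilon>" "\<epsilon>\<^sup>2 \<le> t" shows "norm (fourier (lattice_heat \<epsilon> t) \<zeta>) \<le> 1 / sqrt t"
  using assms order.trans[OF zero_le_power2 assms(2)]
  by (intro norm_fourier_le_L1 integrable_lattice_heat)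
    (simp_all add: lattice_heat_nonneg nn_integral_lattice_heat_le_long_time)

lemma norm_fourier_lattice_heat_le_uniform:
  assumes e: "0 < \<epsilon>" and t: "0 < t" shows "norm (fourier (lattice_heat \<epsilon> t) \<zeta>) \<le> 2 / sqrt t"
proof (cases "\<epsilon>\<^sup>2 \<le> t")
  case True
  then have "norm (fourier (lattice_heat \<epsilon> t) \<zeta>) \<le> 1 / sqrt t"
    by (rule norm_fourier_lattice_heat_le_long_time[OF e])
  also have "\<dots> \<le> 2 / sqrt t" using t by (simp add: divide_right_mono)
  finally show ?thesis .
next
  case False
  then have "sqrt t < sqrt (\<epsilon>\<^sup>2)" by (intro real_sqrt_less_mono) simp
  then have "sqrt t < \<epsilon>" using e by simp
  then have "2 / \<epsilon> \<le> 2 / sqrt t" using t e by (intro divide_left_mono) auto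
  then show ?thesis using norm_fourier_lattice_heat_le[OF e, of t \<zeta>] t by linarith
qed

lemma norm_fourier_lattice_heat_decay:
  assumes e: "0 < \<epsilon>" and t: "0 < t" and \<zeta>: "\<zeta> \<noteq> 0"
  shows "norm (fourier (lattice_heat \<epsilon> t) \<zeta>) \<le> 4 * pi / \<bar>\<zeta>\<bar>"
proof -
  define B1 where "B1 = (\<lambda>s. min (\<epsilon> / 2) ((2 / \<epsilon>) / s\<^sup>2))"
  define B2 where "B2 = (\<lambda>s. min (sqrt t / 2) ((1 / (2 * sqrt t)) / s\<^sup>2))"
  have "norm (fourier (lattice_heat \<epsilon> t) \<zeta>) \<le> pi / \<bar>\<zeta>\<bar> * (1 / 4 + 7 / 2)"
  proof (rule norm_fourier_le_deriv_bound[where B = "\<lambda>s. B1 s + B2 s"])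
    show "integrable lborel (lattice_heat \<epsilon> t)" using e t by (intro integrable_lattice_heat) auto
    show "\<bar>lattice_heat \<epsilon> t k\<bar> \<le> 1 / 4" for k
      using lattice_heat_le_form_factor[of t \<epsilon> k] form_factor_le_quarter[OF e, of k] t
        lattice_heat_nonneg[of \<epsilon> t k] by simp
    show "\<exists>d. (lattice_heat \<epsilon> t has_real_derivative d) (at v) \<and> \<bar>d\<bar> \<le> B1 \<bar>v\<bar> + B2 \<bar>v\<bar>"
      if "v \<noteq> 0" for v
      unfolding B1_def B2_def using lattice_heat_deriv_bound[OF e t that] by simp
    show "B1 s' + B2 s' \<le> B1 s + B2 s" if "0 < s" "s \<le> s'" for s s'
      unfolding B1_def B2_def using that t e by (intro add_mono min_divide_square_antimono) auto
    show "(\<lambda>s. B1 s + B2 s) \<in> borel_measurable borel" unfolding B1_def B2_def by measurable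
    have "(\<integral>\<^sup>+s. ennreal (B1 s + B2 s) * indicator {0<..} s \<partial>lborel)
        = (\<integral>\<^sup>+s. ennreal (B1 s) * indicator {0<..} s + ennreal (B2 s) * indicator {0<..} s \<partial>lborel)"
      using e t by (intro nn_integral_cong) (simp add: B1_def B2_def ennreal_plus distrib_right)
    also have "\<dots> = (\<integral>\<^sup>+s. ennreal (B1 s) * indicator {0<..} s \<partial>lborel)
        + (\<integral>\<^sup>+s. ennreal (B2 s) * indicator {0<..} s \<partial>lborel)"
      unfolding B1_def B2_def by (rule nn_integral_add) auto
    also have "\<dots> \<le> ennreal (\<epsilon> / 2 * (1 / \<epsilon>) + (2 / \<epsilon>) / (1 / \<epsilon>))
        + ennreal (sqrt t / 2 * (1 / sqrt t) + (1 / (2 * sqrt t)) / (1 / sqrt t))"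
      unfolding B1_def B2_def using e t by (intro add_mono nn_integral_min_inverse_square_le) auto
    also have "\<dots> = ennreal (5 / 2) + ennreal 1" using e t by simp
    also have "\<dots> = ennreal (7 / 2)" by (subst ennreal_plus[symmetric]) auto
    finally show "(\<integral>\<^sup>+s. ennreal (B1 s + B2 s) * indicator {0<..} s \<partial>lborel) \<le> ennreal (7 / 2)" .
  qed (use \<zeta> in auto)
  also have "\<dots> \<le> 4 * pi / \<bar>\<zeta>\<bar>" using \<zeta> by (simp add: field_simps)
  finally show ?thesis .
qed

text \<open>Schwinger's formula turns \<open>Gbar_integrand\<close> into the time integral of the following function,
  which for fixed \<open>t\<close> factorises over the four coordinates \<open>y\<^sub>1, y\<^sub>2, k\<^sub>1, k\<^sub>2\<close>.\<close>

definition schwinger_integrand ::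
  "real \<Rightarrow> real \<Rightarrow> real \<times> real \<Rightarrow> real \<times> real \<Rightarrow> real \<Rightarrow> (real \<times> real) \<times> (real \<times> real) \<Rightarrow> complex"
where
  "schwinger_integrand m \<epsilon> x z t yk =
     complex_of_real (indicator {0<..} t * t * exp (- t * m\<^sup>2)) *
     ((complex_of_real (gaussian t (fst (fst yk))) * cis (- (fst (fst yk) * fst x)))
      * (complex_of_real (gaussian t (snd (fst yk))) * cis (- (snd (fst yk) * snd x)))
      * ((complex_of_real (lattice_heat \<epsilon> t (fst (snd yk))) * cis (- (fst (snd yk) * fst z)))
         * (complex_of_real (lattice_heat \<epsilon> t (snd (snd yk))) * cis (- (snd (snd yk) * snd z)))))"

lemma schwinger_integrand_eq:
  fixes y k x z :: "real \<times> real" and m \<epsilon> t :: real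
  defines "A \<equiv> (norm y)\<^sup>2 + 4 / \<epsilon>\<^sup>2 * (sin (\<epsilon> * fst k / 2))\<^sup>2 + 4 / \<epsilon>\<^sup>2 * (sin (\<epsilon> * snd k / 2))\<^sup>2 + m\<^sup>2"
  shows "schwinger_integrand m \<epsilon> x z t (y, k) = (indicator {0<..} t * (t * exp (- t * A))) *\<^sub>R
     (complex_of_real (form_factor \<epsilon> (fst k) * form_factor \<epsilon> (snd k)) * cis (- (x \<bullet> y + k \<bullet> z)))"
proof -
  obtain y1 y2 k1 k2 where yk: "y = (y1, y2)" "k = (k1, k2)" by (cases y, cases k) auto
  obtain x1 x2 z1 z2 where xz: "x = (x1, x2)" "z = (z1, z2)" by (cases x, cases z) auto
  have A: "A = y1\<^sup>2 + y2\<^sup>2 + lattice_symbol \<epsilon> k1 + lattice_symbol \<epsilon> k2 + m\<^sup>2"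
    by (simp add: A_def yk norm_Pair lattice_symbol_def)
  have exps: "exp (- t * m\<^sup>2) * gaussian t y1 * gaussian t y2 * lattice_heat \<epsilon> t k1 * lattice_heat \<epsilon> t k2
      = form_factor \<epsilon> k1 * form_factor \<epsilon> k2 * exp (- t * A)"
    unfolding A gaussian_def lattice_heat_def by (simp add: exp_add[symmetric] mult_exp_exp algebra_simps)
  have phases: "cis (- (y1 * x1)) * cis (- (y2 * x2)) * (cis (- (k1 * z1)) * cis (- (k2 * z2)))
      = cis (- (x \<bullet> y + k \<bullet> z))"
    by (simp add: xz yk cis_mult algebra_simps)
  have "schwinger_integrand m \<epsilon> x z t (y, k)
      = complex_of_real (indicator {0<..} t * t
          * (exp (- t * m\<^sup>2) * gaussian t y1 * gaussian t y2 * lattice_heat \<epsilon> t k1 * lattice_heat \<epsilon> t k2))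
        * (cis (- (y1 * x1)) * cis (- (y2 * x2)) * (cis (- (k1 * z1)) * cis (- (k2 * z2))))"
    by (simp add: schwinger_integrand_def xz yk mult_ac)
  also have "\<dots> = (indicator {0<..} t * (t * exp (- t * A))) *\<^sub>R
      (complex_of_real (form_factor \<epsilon> (fst k) * form_factor \<epsilon> (snd k)) * cis (- (x \<bullet> y + k \<bullet> z)))"
    unfolding exps phases by (simp add: yk scaleR_conv_of_real mult_ac)
  finally show ?thesis .
qed

lemma has_bochner_integral_schwinger_integrand:
  assumes "0 < m"
  shows "has_bochner_integral lborel (\<lambda>t. schwinger_integrand m \<epsilon> x z t yk) (Gbar_integrand m \<epsilon> x z yk)"
proof -
  obtain y k where yk: "yk = (y, k)" by (cases yk) auto
  define A where "A = (norm y)\<^sup>2 + 4 / \<epsilon>\<^sup>2 * (sin (\<epsilon> * fst k / 2))\<^sup>2 + 4 / \<epsilon>\<^sup>2 * (sin (\<epsilon> * snd k / 2))\<^sup>2 + m\<^sup>2"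
  have A: "0 < A" using assms unfolding A_def by (intro add_nonneg_pos) auto
  define G where "G = complex_of_real (form_factor \<epsilon> (fst k) * form_factor \<epsilon> (snd k)) * cis (- (x \<bullet> y + k \<bullet> z))"
  have "has_bochner_integral lborel (\<lambda>t. (indicator {0<..} t * (t * exp (- t * A))) *\<^sub>R G) ((1 / A\<^sup>2) *\<^sub>R G)"
    by (rule has_bochner_integral_scaleR_left[OF has_bochner_integral_schwinger[OF A]])
  moreover have "(\<lambda>t. schwinger_integrand m \<epsilon> x z t yk) = (\<lambda>t. (indicator {0<..} t * (t * exp (- t * A))) *\<^sub>R G)"
    unfolding yk A_def G_def by (rule ext) (rule schwinger_integrand_eq)
  moreover have "Gbar_integrand m \<epsilon> x z yk = (1 / A\<^sup>2) *\<^sub>R G"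
  proof -
    have "form_factor \<epsilon> (fst k) * form_factor \<epsilon> (snd k)
        = (sin (\<epsilon> * fst k / 2))\<^sup>2 * (sin (\<epsilon> * snd k / 2))\<^sup>2 / (\<epsilon> ^ 4 * (fst k)\<^sup>2 * (snd k)\<^sup>2)"
      by (simp add: form_factor_def power2_eq_square power4_eq_xxxx mult_ac)
    then show ?thesis
      unfolding Gbar_integrand_def yk G_def A_def by (simp add: scaleR_conv_of_real field_simps)
  qed
  ultimately show ?thesis by simp
qed

lemma schwinger_integrand_nonpos_time:
  assumes "\<not> 0 < t" shows "schwinger_integrand m \<epsilon> x z t = (\<lambda>_. 0)"
  using assms by (auto simp: schwinger_integrand_def indicator_def)

lemma schwinger_integrand_space_integral:
  assumes e: "0 < \<epsilon>" and t: "0 < t"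
  shows "integrable lborel (schwinger_integrand m \<epsilon> x z t)"
    and "(\<integral>yk. schwinger_integrand m \<epsilon> x z t yk \<partial>lborel)
      = complex_of_real (t * exp (- t * m\<^sup>2)) *
        (fourier (gaussian t) (fst x) * fourier (gaussian t) (snd x)
         * (fourier (lattice_heat \<epsilon> t) (fst z) * fourier (lattice_heat \<epsilon> t) (snd z)))"
proof -
  define F1 where "F1 = (\<lambda>y. complex_of_real (gaussian t y) * cis (- (y * fst x)))"
  define F2 where "F2 = (\<lambda>y. complex_of_real (gaussian t y) * cis (- (y * snd x)))"
  define F3 where "F3 = (\<lambda>k. complex_of_real (lattice_heat \<epsilon> t k) * cis (- (k * fst z)))"
  define F4 where "F4 = (\<lambda>k. complex_of_real (lattice_heat \<epsilon> t k) * cis (- (k * snd z)))"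
  have y: "integrable lborel F1" "integrable lborel F2" unfolding F1_def F2_def
    by (intro integrable_fourier_integrand integrable_gaussian[OF t])+
  have k: "integrable lborel F3" "integrable lborel F4" unfolding F3_def F4_def
    using e t by (intro integrable_fourier_integrand integrable_lattice_heat; simp)+
  define U where "U = (\<lambda>p::real \<times> real. F1 (fst p) * F2 (snd p))"
  define V where "V = (\<lambda>p::real \<times> real. F3 (fst p) * F4 (snd p))"
  note U = lborel_integral_prod_mult[OF y, folded U_def]
  note V = lborel_integral_prod_mult[OF k, folded V_def]
  note UV = lborel_integral_prod_mult[OF U(1) V(1)]
  have eq: "schwinger_integrand m \<epsilon> x z t
      = (\<lambda>yk. complex_of_real (t * exp (- t * m\<^sup>2)) * (U (fst yk) * V (snd yk)))"
    using t by (intro ext) (simp add: schwinger_integrand_def U_def V_def F1_def F2_def F3_def F4_def)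
  show "integrable lborel (schwinger_integrand m \<epsilon> x z t)" unfolding eq using UV(1) by simp
  show "(\<integral>yk. schwinger_integrand m \<epsilon> x z t yk \<partial>lborel)
      = complex_of_real (t * exp (- t * m\<^sup>2)) *
        (fourier (gaussian t) (fst x) * fourier (gaussian t) (snd x)
         * (fourier (lattice_heat \<epsilon> t) (fst z) * fourier (lattice_heat \<epsilon> t) (snd z)))"
    unfolding eq by (simp add: UV(2) U(2) V(2) fourier_def F1_def F2_def F3_def F4_def)
qed

lemma schwinger_integrand_measurable[measurable]:
  "(\<lambda>p. schwinger_integrand m \<epsilon> x z (fst p) (snd p)) \<in> borel_measurable (lborel \<Otimes>\<^sub>M lborel)"
proof -
  let ?B = "borel :: real measure"
  have "sets (lborel \<Otimes>\<^sub>M (lborel :: ((real \<times> real) \<times> (real \<times> real)) measure))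
      = sets (?B \<Otimes>\<^sub>M ((?B \<Otimes>\<^sub>M ?B) \<Otimes>\<^sub>M (?B \<Otimes>\<^sub>M ?B)))"
    by (intro sets_pair_measure_cong) (simp_all only: borel_prod sets_lborel)
  moreover have "(\<lambda>p. schwinger_integrand m \<epsilon> x z (fst p) (snd p))
      \<in> borel_measurable (?B \<Otimes>\<^sub>M ((?B \<Otimes>\<^sub>M ?B) \<Otimes>\<^sub>M (?B \<Otimes>\<^sub>M ?B)))"
    unfolding schwinger_integrand_def gaussian_def lattice_heat_def form_factor_def lattice_symbol_def
    by measurable
  ultimately show ?thesis using measurable_cong_sets[OF _ refl] by blast
qed

lemma nn_integral_norm_schwinger_integrand_le:
  assumes e: "0 < \<epsilon>" and t: "0 < t"
  shows "(\<integral>\<^sup>+yk. ennreal (norm (schwinger_integrand m \<epsilon> x z t yk)) \<partial>lborel)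
    \<le> ennreal (exp (- t * m\<^sup>2) * (4 * pi / \<epsilon>\<^sup>2))"
proof -
  define c where "c = t * exp (- t * m\<^sup>2)"
  define Y where "Y = (\<lambda>p::real \<times> real. ennreal (gaussian t (fst p)) * ennreal (gaussian t (snd p)))"
  define K where "K = (\<lambda>p::real \<times> real. ennreal (lattice_heat \<epsilon> t (fst p)) * ennreal (lattice_heat \<epsilon> t (snd p)))"
  have c: "0 \<le> c" using t by (simp add: c_def)
  have [measurable]: "Y \<in> borel_measurable borel" "K \<in> borel_measurable borel"
    unfolding Y_def K_def borel_prod[symmetric] by measurable
  have "(\<integral>\<^sup>+yk. ennreal (norm (schwinger_integrand m \<epsilon> x z t yk)) \<partial>lborel)
      = (\<integral>\<^sup>+yk. ennreal c * (Y (fst yk) * K (snd yk)) \<partial>lborel)"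
    using t c by (intro nn_integral_cong) (simp add: schwinger_integrand_def c_def Y_def K_def norm_mult
        abs_mult lattice_heat_nonneg gaussian_pos less_imp_le ennreal_mult mult_nonneg_nonneg)
  also have "\<dots> = ennreal c * ((\<integral>\<^sup>+p. Y p \<partial>lborel) * (\<integral>\<^sup>+q. K q \<partial>lborel))"
  proof -
    have "(\<lambda>yk. Y (fst yk) * K (snd yk)) \<in> borel_measurable (borel \<Otimes>\<^sub>M borel)" by measurable
    then have "(\<lambda>yk. Y (fst yk) * K (snd yk)) \<in> borel_measurable borel" by (simp only: borel_prod)
    then show ?thesis by (subst nn_integral_cmult) (auto simp: nn_integral_lborel_prod_mult)
  qed
  also have "(\<integral>\<^sup>+p. Y p \<partial>lborel) = ennreal (sqrt (pi / t)) * ennreal (sqrt (pi / t))"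
    unfolding Y_def using t by (subst nn_integral_lborel_prod_mult) (auto simp: nn_integral_gaussian)
  also have "(\<integral>\<^sup>+q. K q \<partial>lborel) \<le> ennreal (2 / \<epsilon>) * ennreal (2 / \<epsilon>)"
    unfolding K_def using nn_integral_lattice_heat_le[OF e, of t] t
    by (subst nn_integral_lborel_prod_mult) (auto intro!: mult_mono)
  also have "ennreal c * (ennreal (sqrt (pi / t)) * ennreal (sqrt (pi / t)) * (ennreal (2 / \<epsilon>) * ennreal (2 / \<epsilon>)))
      = ennreal (exp (- t * m\<^sup>2) * (4 * pi / \<epsilon>\<^sup>2))"
  proof -
    have "c * (sqrt (pi / t) * sqrt (pi / t) * (2 / \<epsilon> * (2 / \<epsilon>))) = exp (- t * m\<^sup>2) * (4 * pi / \<epsilon>\<^sup>2)"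
      using t e by (simp add: c_def power2_eq_square field_simps)
    then show ?thesis using c t e by (simp add: ennreal_mult[symmetric] del: ennreal_numeral)
  qed
  finally show ?thesis by (simp add: mult_left_mono)
qed

lemma integrable_schwinger_integrand:
  assumes e: "0 < \<epsilon>" and m: "0 < m"
  shows "integrable (lborel \<Otimes>\<^sub>M lborel) (\<lambda>(t, yk). schwinger_integrand m \<epsilon> x z t yk)"
proof (rule integrableI_bounded)
  have "(\<integral>\<^sup>+p. ennreal (norm (case p of (t, yk) \<Rightarrow> schwinger_integrand m \<epsilon> x z t yk)) \<partial>(lborel \<Otimes>\<^sub>M lborel))
      = (\<integral>\<^sup>+t. \<integral>\<^sup>+yk. ennreal (norm (schwinger_integrand m \<epsilon> x z t yk)) \<partial>lborel \<partial>lborel)"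
    by (subst lborel.nn_integral_fst[symmetric]) (auto simp: case_prod_beta')
  also have "\<dots> \<le> (\<integral>\<^sup>+t. ennreal (4 * pi / \<epsilon>\<^sup>2) * ennreal (indicator {0<..} t * exp (- t * m\<^sup>2)) \<partial>lborel)"
  proof (intro nn_integral_mono)
    fix t :: real
    show "(\<integral>\<^sup>+yk. ennreal (norm (schwinger_integrand m \<epsilon> x z t yk)) \<partial>lborel)
        \<le> ennreal (4 * pi / \<epsilon>\<^sup>2) * ennreal (indicator {0<..} t * exp (- t * m\<^sup>2))"
      using nn_integral_norm_schwinger_integrand_le[OF e, of t m x z]
      by (cases "0 < t") (simp_all add: schwinger_integrand_nonpos_time ennreal_mult[symmetric] mult_ac)
  qed
  also have "\<dots> = ennreal (4 * pi / \<epsilon>\<^sup>2) * ennreal (1 / m\<^sup>2)"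
    using m nn_integral_exp_neg[of "m\<^sup>2"] by (simp add: nn_integral_cmult)
  also have "\<dots> < \<infinity>" by (simp add: ennreal_mult_less_top)
  finally show "(\<integral>\<^sup>+p. ennreal (norm (case p of (t, yk) \<Rightarrow> schwinger_integrand m \<epsilon> x z t yk))
      \<partial>(lborel \<Otimes>\<^sub>M lborel)) < \<infinity>" .
qed (simp add: case_prod_beta')

definition fourier_product :: "real \<Rightarrow> real \<Rightarrow> real \<times> real \<Rightarrow> real \<times> real \<Rightarrow> real" where
  "fourier_product \<epsilon> t x z =
     norm (fourier (gaussian t) (fst x)) * norm (fourier (gaussian t) (snd x))
     * (norm (fourier (lattice_heat \<epsilon> t) (fst z)) * norm (fourier (lattice_heat \<epsilon> t) (snd z)))"

lemma norm_integral_Gbar_integrand_le_time_integral: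
  assumes e: "0 < \<epsilon>" and m: "0 < m"
  shows "ennreal (norm (integral\<^sup>L lborel (Gbar_integrand m \<epsilon> x z)))
    \<le> (\<integral>\<^sup>+t. ennreal (indicator {0<..} t * t * exp (- t * m\<^sup>2) * fourier_product \<epsilon> t x z) \<partial>lborel)"
proof -
  note I = integrable_schwinger_integrand[OF e m, of x z]
  have "integral\<^sup>L lborel (Gbar_integrand m \<epsilon> x z)
      = (\<integral>yk. \<integral>t. schwinger_integrand m \<epsilon> x z t yk \<partial>lborel \<partial>lborel)"
    by (intro Bochner_Integration.integral_cong refl)
      (simp add: has_bochner_integral_integral_eq[OF has_bochner_integral_schwinger_integrand[OF m]])
  also have "\<dots> = (\<integral>t. \<integral>yk. schwinger_integrand m \<epsilon> x z t yk \<partial>lborel \<partial>lborel)"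
    by (rule lborel_pair.Fubini_integral[OF I])
  finally have "ennreal (norm (integral\<^sup>L lborel (Gbar_integrand m \<epsilon> x z)))
      \<le> (\<integral>\<^sup>+t. norm (\<integral>yk. schwinger_integrand m \<epsilon> x z t yk \<partial>lborel) \<partial>lborel)"
    using integral_norm_bound_ennreal[OF lborel_pair.integrable_fst[OF I]] by simp
  also have "\<dots> = (\<integral>\<^sup>+t. ennreal (indicator {0<..} t * t * exp (- t * m\<^sup>2) * fourier_product \<epsilon> t x z) \<partial>lborel)"
  proof (intro nn_integral_cong)
    fix t :: real
    show "ennreal (norm (\<integral>yk. schwinger_integrand m \<epsilon> x z t yk \<partial>lborel))
        = ennreal (indicator {0<..} t * t * exp (- t * m\<^sup>2) * fourier_product \<epsilon> t x z)"
      using schwinger_integrand_space_integral(2)[OF e, of t m x z]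
      by (cases "0 < t") (simp_all add: schwinger_integrand_nonpos_time norm_mult fourier_product_def)
  qed
  finally show ?thesis .
qed

lemma fourier_product_nonneg: "0 \<le> fourier_product \<epsilon> t x z"
  by (simp add: fourier_product_def)

lemma fourier_product_le_short_time:
  fixes x z :: "real \<times> real"
  defines "r \<equiv> sqrt ((norm x)\<^sup>2 + (norm z)\<^sup>2)"
  assumes e: "0 < \<epsilon>" and t: "0 < t" "t \<le> r\<^sup>2"
  shows "t * fourier_product \<epsilon> t x z \<le> 80 * pi / (r * sqrt t)"
proof -
  have r: "0 < r" using t by (cases "r = 0") (auto simp: r_def)
  have decay: "norm (fourier (gaussian t) c) \<le> 10 * pi / r \<and> norm (fourier (lattice_heat \<epsilon> t) c) \<le> 10 * pi / r"
    if "r / 2 \<le> \<bar>c\<bar>" for c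
  proof -
    have c: "c \<noteq> 0" using that r by auto
    have "5 * pi / \<bar>c\<bar> \<le> 5 * pi / (r / 2)" using that r by (intro divide_left_mono) auto
    moreover have "4 * pi / \<bar>c\<bar> \<le> 5 * pi / \<bar>c\<bar>" by (intro divide_right_mono) auto
    ultimately show ?thesis
      using norm_fourier_gaussian_decay[OF t(1) c] norm_fourier_lattice_heat_decay[OF e t(1) c] by simp
  qed
  have "sqrt pi \<le> 2" using pi_less_4 real_sqrt_le_mono[of pi 4] by simp
  then have "sqrt (pi / t) \<le> 2 / sqrt t" unfolding real_sqrt_divide using t by (intro divide_right_mono) auto
  then have uniform: "norm (fourier (gaussian t) c) \<le> 2 / sqrt t" "norm (fourier (lattice_heat \<epsilon> t) c) \<le> 2 / sqrt t"
    for c using norm_fourier_gaussian_le[OF t(1), of c] norm_fourier_lattice_heat_le_uniform[OF e t(1), of c]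
    by linarith+
  have "norm (fourier (gaussian t) (fst x)) \<le> 10 * pi / r \<or> norm (fourier (gaussian t) (snd x)) \<le> 10 * pi / r
      \<or> norm (fourier (lattice_heat \<epsilon> t) (fst z)) \<le> 10 * pi / r \<or> norm (fourier (lattice_heat \<epsilon> t) (snd z)) \<le> 10 * pi / r"
    using exists_coordinate_ge_half_norm[of x z, folded r_def] decay by blast
  then have "fourier_product \<epsilon> t x z \<le> (2 / sqrt t) ^ 3 * (10 * pi / r)"
    unfolding fourier_product_def by (intro mult4_le_cube_mult norm_ge_zero uniform)
  then have "t * fourier_product \<epsilon> t x z \<le> t * ((2 / sqrt t) ^ 3 * (10 * pi / r))"
    using t by (intro mult_left_mono) auto
  also have "\<dots> = 80 * pi / (r * sqrt t)"
    using t r by (simp add: power3_eq_cube field_simps real_sqrt_mult_self)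
  finally show ?thesis .
qed

lemma fourier_product_le_medium_time:
  assumes "0 < \<epsilon>" "0 < t" shows "t * fourier_product \<epsilon> t x z \<le> 4 * pi / \<epsilon>\<^sup>2"
proof -
  have "fourier_product \<epsilon> t x z \<le> sqrt (pi / t) * sqrt (pi / t) * (2 / \<epsilon> * (2 / \<epsilon>))"
    unfolding fourier_product_def using assms
    by (intro mult4_mono norm_ge_zero norm_fourier_gaussian_le norm_fourier_lattice_heat_le) auto
  then have "t * fourier_product \<epsilon> t x z \<le> t * (sqrt (pi / t) * sqrt (pi / t) * (2 / \<epsilon> * (2 / \<epsilon>)))"
    using assms by (intro mult_left_mono) auto
  also have "\<dots> = 4 * pi / \<epsilon>\<^sup>2" using assms by (simp add: field_simps power2_eq_square)
  finally show ?thesis .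
qed

lemma fourier_product_le_long_time:
  assumes "0 < \<epsilon>" "\<epsilon>\<^sup>2 \<le> t" shows "t * fourier_product \<epsilon> t x z \<le> pi / t"
proof -
  have t: "0 < t" using zero_less_power[OF assms(1), of 2] assms(2) by linarith
  have "fourier_product \<epsilon> t x z \<le> sqrt (pi / t) * sqrt (pi / t) * (1 / sqrt t * (1 / sqrt t))"
    unfolding fourier_product_def using assms t
    by (intro mult4_mono norm_ge_zero norm_fourier_gaussian_le norm_fourier_lattice_heat_le_long_time) auto
  then have "t * fourier_product \<epsilon> t x z \<le> t * (sqrt (pi / t) * sqrt (pi / t) * (1 / sqrt t * (1 / sqrt t)))"
    using t by (intro mult_left_mono) auto
  also have "\<dots> = pi / t" using t by (simp add: field_simps)
  finally show ?thesis .
qed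

text \<open>The short-time majorant covers \<open>t \<le> r\<^sup>2\<close> (decay in the largest coordinate) and
  \<open>r\<^sup>2 \<le> t \<le> \<epsilon>\<^sup>2\<close> (the \<open>L\<^sup>1\<close> bounds); the long-time one covers \<open>t \<ge> R\<^sup>2\<close> with \<open>R = max r \<epsilon>\<close>,
  and only its part below \<open>max 1 R\<^sup>2\<close> produces the logarithm.\<close>

definition short_time_majorant :: "real \<Rightarrow> real \<Rightarrow> real \<Rightarrow> real" where
  "short_time_majorant \<epsilon> r t =
     80 * pi / r * (indicator {0..r\<^sup>2} t * t powr (- (1 / 2))) + 4 * pi / \<epsilon>\<^sup>2 * indicator {r\<^sup>2..\<epsilon>\<^sup>2} t"

definition long_time_majorant :: "real \<Rightarrow> real \<Rightarrow> real \<Rightarrow> real" where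
  "long_time_majorant m R t =
     pi * (indicator {R\<^sup>2..max 1 (R\<^sup>2)} t / t) + pi / m\<^sup>2 * (indicator {max 1 (R\<^sup>2)..} t * t powr (-2))"

lemma short_time_majorant_nonneg: "0 < \<epsilon> \<Longrightarrow> 0 \<le> r \<Longrightarrow> 0 \<le> short_time_majorant \<epsilon> r t"
  by (simp add: short_time_majorant_def)

lemma long_time_majorant_nonneg:
  assumes "0 < R" shows "0 \<le> long_time_majorant m R t"
proof -
  have "R\<^sup>2 \<le> t \<Longrightarrow> 0 < t" using assms by (metis order.strict_trans2 zero_less_power)
  then show ?thesis by (auto simp: long_time_majorant_def indicator_def)
qed

lemma exp_mass_mult_div_le:
  fixes t m :: real assumes "0 < t" "0 < m"
  shows "exp (- t * m\<^sup>2) * (pi / t) \<le> pi / m\<^sup>2 * t powr (-2)"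
proof -
  have "t * m\<^sup>2 * exp (- (t * m\<^sup>2)) \<le> 1" using assms by (intro mult_exp_neg_le_1) simp
  then have "exp (- t * m\<^sup>2) \<le> 1 / (t * m\<^sup>2)" using assms by (simp add: field_simps)
  then have "exp (- t * m\<^sup>2) * (pi / t) \<le> 1 / (t * m\<^sup>2) * (pi / t)" using assms by (intro mult_right_mono) auto
  also have "\<dots> = pi / m\<^sup>2 * t powr (-2)"
    using assms by (simp add: powr_minus_divide power2_eq_square field_simps)
  finally show ?thesis .
qed

lemma time_integrand_le_long_time:
  assumes e: "0 < \<epsilon>" and m: "0 < m" and t: "(max r \<epsilon>)\<^sup>2 \<le> t"
  shows "indicator {0<..} t * t * exp (- t * m\<^sup>2) * fourier_product \<epsilon> t x z \<le> long_time_majorant m (max r \<epsilon>) t"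
proof -
  have "\<epsilon>\<^sup>2 \<le> (max r \<epsilon>)\<^sup>2" using e by (simp add: power_mono)
  then have long: "\<epsilon>\<^sup>2 \<le> t" using t by simp
  then have t_pos: "0 < t" using zero_less_power[OF e, of 2] by linarith
  have "indicator {0<..} t * t * exp (- t * m\<^sup>2) * fourier_product \<epsilon> t x z
      = exp (- t * m\<^sup>2) * (t * fourier_product \<epsilon> t x z)"
    using t_pos by simp
  also have "\<dots> \<le> exp (- t * m\<^sup>2) * (pi / t)"
    by (intro mult_left_mono fourier_product_le_long_time[OF e long]) simp
  also have "\<dots> \<le> long_time_majorant m (max r \<epsilon>) t"
  proof (cases "t \<le> max 1 ((max r \<epsilon>)\<^sup>2)")
    case True
    have "exp (- t * m\<^sup>2) * (pi / t) \<le> pi / t" using t_pos by (intro mult_left_le_one_le) auto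
    moreover have "pi * (indicator {(max r \<epsilon>)\<^sup>2..max 1 ((max r \<epsilon>)\<^sup>2)} t / t) = pi / t" using True t by simp
    moreover have "0 \<le> pi / m\<^sup>2 * (indicator {max 1 ((max r \<epsilon>)\<^sup>2)..} t * t powr (-2))" by simp
    ultimately show ?thesis unfolding long_time_majorant_def by linarith
  next
    case False
    then have "indicator {(max r \<epsilon>)\<^sup>2..max 1 ((max r \<epsilon>)\<^sup>2)} t = (0 :: real)"
      and "indicator {max 1 ((max r \<epsilon>)\<^sup>2)..} t = (1 :: real)" by (auto simp: indicator_def)
    then show ?thesis using exp_mass_mult_div_le[OF t_pos m] by (simp add: long_time_majorant_def)
  qed
  finally show ?thesis .
qed

lemma time_integrand_le_majorants:
  fixes x z :: "real \<times> real"
  assumes e: "0 < \<epsilon>" and m: "0 < m"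
  defines "r \<equiv> sqrt ((norm x)\<^sup>2 + (norm z)\<^sup>2)"
  shows "indicator {0<..} t * t * exp (- t * m\<^sup>2) * fourier_product \<epsilon> t x z
    \<le> short_time_majorant \<epsilon> r t + long_time_majorant m (max r \<epsilon>) t"
proof -
  have r: "0 \<le> r" by (simp add: r_def)
  have short: "0 \<le> short_time_majorant \<epsilon> r t" and long: "0 \<le> long_time_majorant m (max r \<epsilon>) t"
    using e r by (auto intro: short_time_majorant_nonneg long_time_majorant_nonneg)
  have below_tP: "indicator {0<..} t * t * exp (- t * m\<^sup>2) * fourier_product \<epsilon> t x z
      \<le> t * fourier_product \<epsilon> t x z" if "0 < t"
    using that fourier_product_nonneg[of \<epsilon> t x z] by (simp add: mult_left_le_one_le)
  have "r\<^sup>2 < t \<Longrightarrow> \<epsilon>\<^sup>2 < t \<Longrightarrow> (max r \<epsilon>)\<^sup>2 \<le> t" by (simp add: max_def)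
  then consider "t \<le> 0" | "0 < t" "t \<le> r\<^sup>2" | "r\<^sup>2 < t" "t \<le> \<epsilon>\<^sup>2" | "(max r \<epsilon>)\<^sup>2 \<le> t"
    using r by force
  then show ?thesis
  proof cases
    case 1
    then show ?thesis using short long by simp
  next
    case 2
    have "t * fourier_product \<epsilon> t x z \<le> 80 * pi / (r * sqrt t)"
      using 2 unfolding r_def by (rule fourier_product_le_short_time[OF e])
    also have "t powr (- (1 / 2)) = 1 / sqrt t" using 2 by (simp add: powr_minus_divide powr_half_sqrt)
    then have "80 * pi / (r * sqrt t) \<le> short_time_majorant \<epsilon> r t"
      using 2 e by (simp add: short_time_majorant_def)
    finally show ?thesis using below_tP[OF 2(1)] long by simp
  next
    case 3
    then have "0 < t" using r by (meson le_less_trans zero_le_power2)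
    then have "t * fourier_product \<epsilon> t x z \<le> short_time_majorant \<epsilon> r t"
      using 3 fourier_product_le_medium_time[OF e] r by (simp add: short_time_majorant_def)
    then show ?thesis using below_tP[OF \<open>0 < t\<close>] long by simp
  next
    case 4
    then show ?thesis using time_integrand_le_long_time[OF e m, of r t x z] short by simp
  qed
qed

lemma nn_integral_short_time_majorant_le:
  assumes e: "0 < \<epsilon>" and r: "0 \<le> r"
  shows "(\<integral>\<^sup>+t. ennreal (short_time_majorant \<epsilon> r t) \<partial>lborel) \<le> ennreal (164 * pi)"
proof -
  let ?decay = "\<lambda>t. 80 * pi / r * (indicator {0..r\<^sup>2} t * t powr (- (1 / 2)))"
  let ?L1 = "\<lambda>t. 4 * pi / \<epsilon>\<^sup>2 * indicator {r\<^sup>2..\<epsilon>\<^sup>2} t"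
  have split: "(\<integral>\<^sup>+t. ennreal (short_time_majorant \<epsilon> r t) \<partial>lborel)
      = (\<integral>\<^sup>+t. ennreal (?decay t) \<partial>lborel) + (\<integral>\<^sup>+t. ennreal (?L1 t) \<partial>lborel)"
    using r by (simp add: short_time_majorant_def ennreal_plus nn_integral_add)
  have decay: "(\<integral>\<^sup>+t. ennreal (?decay t) \<partial>lborel) = ennreal (80 * pi / r * (2 * sqrt (r\<^sup>2)))"
    using r by (subst nn_integral_ennreal_cmult) (auto simp: nn_integral_powr_minus_half ennreal_mult'[symmetric])
  have "(\<integral>\<^sup>+t. ennreal (?L1 t) \<partial>lborel) = ennreal (4 * pi / \<epsilon>\<^sup>2) * emeasure lborel {r\<^sup>2..\<epsilon>\<^sup>2}"
    by (subst nn_integral_ennreal_cmult) (auto simp: ennreal_indicator)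
  also have "\<dots> \<le> ennreal (4 * pi / \<epsilon>\<^sup>2) * emeasure lborel {0..\<epsilon>\<^sup>2}"
    by (intro mult_left_mono emeasure_mono) auto
  also have "\<dots> = ennreal (4 * pi)" using e by (simp add: ennreal_mult[symmetric])
  finally have L1: "(\<integral>\<^sup>+t. ennreal (?L1 t) \<partial>lborel) \<le> ennreal (4 * pi)" .
  have "80 * pi / r * (2 * sqrt (r\<^sup>2)) \<le> 160 * pi" using r by (cases "r = 0") auto
  then have "ennreal (80 * pi / r * (2 * sqrt (r\<^sup>2))) + ennreal (4 * pi) \<le> ennreal (164 * pi)"
    using r by (simp add: ennreal_plus[symmetric] del: ennreal_plus)
  then show ?thesis unfolding split decay using L1 by (meson add_left_mono order.trans)
qed

lemma ln_max_1_diff_eq_log_plus: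
  fixes R :: real assumes "0 < R"
  shows "ln (max 1 (R\<^sup>2)) - ln (R\<^sup>2) = 2 * log_plus (1 / R)"
proof (cases "1 \<le> R")
  case True
  then have "max 1 (R\<^sup>2) = R\<^sup>2" by (simp add: one_le_power)
  moreover have "ln (1 / R) \<le> 0" using True assms by (simp add: ln_div)
  ultimately show ?thesis by (simp add: log_plus_def)
next
  case False
  then have "max 1 (R\<^sup>2) = 1" using assms by (simp add: power_le_one)
  moreover have "0 \<le> ln (1 / R)" using False assms by (simp add: ln_div)
  moreover have "ln (R\<^sup>2) = 2 * ln R" using assms by (simp add: ln_realpow)
  ultimately show ?thesis using assms by (simp add: log_plus_def ln_div)
qed

lemma nn_integral_long_time_majorant_le:
  assumes R: "0 < R" and m: "0 < m"
  shows "(\<integral>\<^sup>+t. ennreal (long_time_majorant m R t) \<partial>lborel) \<le> ennreal (pi / m\<^sup>2 + 2 * pi * log_plus (1 / R))"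
proof -
  define M where "M = max 1 (R\<^sup>2)"
  have M: "0 < R\<^sup>2" "R\<^sup>2 \<le> M" "1 \<le> M" using R by (auto simp: M_def)
  have pos: "0 < t" if "R\<^sup>2 \<le> t" for t using that M(1) by linarith
  have nonneg: "0 \<le> pi * (indicator {R\<^sup>2..M} t / t)" "0 \<le> pi / m\<^sup>2 * (indicator {M..} t * t powr (-2))"
    for t by (auto simp: indicator_def intro!: divide_nonneg_pos pos)
  have "(\<integral>\<^sup>+t. ennreal (long_time_majorant m R t) \<partial>lborel)
      = (\<integral>\<^sup>+t. ennreal (pi * (indicator {R\<^sup>2..M} t / t)) + ennreal (pi / m\<^sup>2 * (indicator {M..} t * t powr (-2))) \<partial>lborel)"
    unfolding long_time_majorant_def M_def[symmetric] by (simp only: ennreal_plus[OF nonneg])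
  also have "\<dots> = (\<integral>\<^sup>+t. ennreal (pi * (indicator {R\<^sup>2..M} t / t)) \<partial>lborel)
        + (\<integral>\<^sup>+t. ennreal (pi / m\<^sup>2 * (indicator {M..} t * t powr (-2))) \<partial>lborel)"
    by (rule nn_integral_add) auto
  also have "(\<integral>\<^sup>+t. ennreal (pi * (indicator {R\<^sup>2..M} t / t)) \<partial>lborel) = ennreal (pi * (ln M - ln (R\<^sup>2)))"
    using M by (subst nn_integral_ennreal_cmult) (auto simp: nn_integral_inverse ennreal_mult'[symmetric])
  also have "(\<integral>\<^sup>+t. ennreal (pi / m\<^sup>2 * (indicator {M..} t * t powr (-2))) \<partial>lborel) = ennreal (pi / m\<^sup>2 * (1 / M))"
    using M by (subst nn_integral_ennreal_cmult) (auto simp: nn_integral_powr_minus_2_atLeast ennreal_mult'[symmetric])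
  also have "pi / m\<^sup>2 * (1 / M) \<le> pi / m\<^sup>2" using M m by (intro mult_left_le) auto
  then have "ennreal (pi * (ln M - ln (R\<^sup>2))) + ennreal (pi / m\<^sup>2 * (1 / M))
      \<le> ennreal (pi / m\<^sup>2 + 2 * pi * log_plus (1 / R))"
    using ln_max_1_diff_eq_log_plus[OF R] M
    by (simp add: M_def ennreal_plus[symmetric] log_plus_def del: ennreal_plus)
  finally show ?thesis .
qed

lemma norm_integral_Gbar_integrand_le:
  assumes e: "0 < \<epsilon>" and m: "0 < m"
  shows "norm (integral\<^sup>L lborel (Gbar_integrand m \<epsilon> x z))
    \<le> 164 * pi + pi / m\<^sup>2 + 2 * pi * log_plus (1 / max (sqrt ((norm x)\<^sup>2 + (norm z)\<^sup>2)) \<epsilon>)"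
proof -
  define r where "r = sqrt ((norm x)\<^sup>2 + (norm z)\<^sup>2)"
  have r: "0 \<le> r" and R: "0 < max r \<epsilon>" using e by (auto simp: r_def)
  have "ennreal (norm (integral\<^sup>L lborel (Gbar_integrand m \<epsilon> x z)))
      \<le> (\<integral>\<^sup>+t. ennreal (indicator {0<..} t * t * exp (- t * m\<^sup>2) * fourier_product \<epsilon> t x z) \<partial>lborel)"
    by (rule norm_integral_Gbar_integrand_le_time_integral[OF e m])
  also have "\<dots> \<le> (\<integral>\<^sup>+t. ennreal (short_time_majorant \<epsilon> r t) + ennreal (long_time_majorant m (max r \<epsilon>) t) \<partial>lborel)"
  proof (intro nn_integral_mono)
    fix t
    have "ennreal (indicator {0<..} t * t * exp (- t * m\<^sup>2) * fourier_product \<epsilon> t x z)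
        \<le> ennreal (short_time_majorant \<epsilon> r t + long_time_majorant m (max r \<epsilon>) t)"
      by (intro ennreal_leI time_integrand_le_majorants[OF e m, of t x z, folded r_def])
    also have "\<dots> = ennreal (short_time_majorant \<epsilon> r t) + ennreal (long_time_majorant m (max r \<epsilon>) t)"
      using e r R by (intro ennreal_plus short_time_majorant_nonneg long_time_majorant_nonneg)
    finally show "ennreal (indicator {0<..} t * t * exp (- t * m\<^sup>2) * fourier_product \<epsilon> t x z)
        \<le> ennreal (short_time_majorant \<epsilon> r t) + ennreal (long_time_majorant m (max r \<epsilon>) t)" .
  qed
  also have "\<dots> = (\<integral>\<^sup>+t. ennreal (short_time_majorant \<epsilon> r t) \<partial>lborel)
      + (\<integral>\<^sup>+t. ennreal (long_time_majorant m (max r \<epsilon>) t) \<partial>lborel)"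
    by (rule nn_integral_add) (auto simp: short_time_majorant_def long_time_majorant_def)
  also have "\<dots> \<le> ennreal (164 * pi) + ennreal (pi / m\<^sup>2 + 2 * pi * log_plus (1 / max r \<epsilon>))"
    by (intro add_mono nn_integral_short_time_majorant_le[OF e r] nn_integral_long_time_majorant_le[OF R m])
  finally show ?thesis
    by (simp add: r_def ennreal_plus[symmetric] ennreal_le_iff log_plus_def add_nonneg_nonneg del: ennreal_plus)
qed

theorem mainTheorem15:
  fixes m C :: real
  assumes "m > 0" and "C > 2 / (4 * pi)\<^sup>2"
  shows "\<exists>D. \<forall>\<epsilon>\<in>{0<..1}. \<forall>x z :: real \<times> real.
           norm (Gbar m \<epsilon> x z)
             \<le> C * log_plus (1 / max (sqrt ((norm x)\<^sup>2 + (norm z)\<^sup>2)) \<epsilon>) + D"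
proof -
  have "2 * pi / (2 * pi) ^ 4 \<le> 2 / (4 * pi)\<^sup>2"
    using pi_ge_two by (simp add: power_numeral_reduce field_simps)
  then have coefficient: "2 * pi / (2 * pi) ^ 4 \<le> C" using assms(2) by linarith
  define D where "D = (164 * pi + pi / m\<^sup>2) / (2 * pi) ^ 4"
  show ?thesis
  proof (intro exI[of _ D] ballI allI)
    fix \<epsilon> :: real and x z :: "real \<times> real"
    assume "\<epsilon> \<in> {0<..1}"
    define L where "L = log_plus (1 / max (sqrt ((norm x)\<^sup>2 + (norm z)\<^sup>2)) \<epsilon>)"
    have L: "0 \<le> L" by (simp add: L_def log_plus_def)
    have "norm (Gbar m \<epsilon> x z) = norm (integral\<^sup>L lborel (Gbar_integrand m \<epsilon> x z)) / (2 * pi) ^ 4"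
      unfolding Gbar_def norm_mult norm_of_real by simp
    also have "\<dots> \<le> (164 * pi + pi / m\<^sup>2 + 2 * pi * L) / (2 * pi) ^ 4"
      using \<open>\<epsilon> \<in> {0<..1}\<close> assms(1) unfolding L_def
      by (intro divide_right_mono norm_integral_Gbar_integrand_le) auto
    also have "\<dots> = 2 * pi / (2 * pi) ^ 4 * L + D" by (simp add: D_def add_divide_distrib)
    also have "\<dots> \<le> C * L + D" using coefficient L by (intro add_right_mono mult_right_mono)
    finally show "norm (Gbar m \<epsilon> x z) \<le> C * L + D" .
  qed
qed

end
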